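(* Let $k$ be sufficiently large, $r=2^k\ln 2-\frac{1+\ln 2}{2}-\epsilon_k$ with $\epsilon_k=\Theta_k(2^{-k/3})$, $M=\lceil rN\rceil$. With probability $1-o(1)$ as $N\to\infty$, every satisfying assignment of the pruned formula $\Phi'$ (on the variables $V'$) extends to a satisfying assignment of $\Phi=\Phi_k(N,M)$.
   Context: $\Phi=\Phi_k(N,M)$ is the random $k$-CNF on $V=\{x_1,\dots,x_N\}$ with $M$ clauses, each literal chosen independently and uniformly from $\{x_1,\neg x_1,\dots,x_N,\neg x_N\}$; $D_l$ denotes the number of occurrences of literal $l$. Pruning: PR1: let $U$ be the set of variables $x$ with $\max\{|D_x-kr/2|,|D_{\neg x}-kr/2|\}>k^32^{k/2}$. PR2: while there is a clause at least three of whose literals have underlying variable in $U$, remove all such clauses and add to $U$ every variable $x$ such that in the reduced formula the degree of $x$ or $\neg x$ differs from $kr/2$ by more than $k^32^{k/2}$. PR3: delete literals of variables in $U$ from all remaining clauses. The result is $\Phi'$, a CNF on $V'=V\setminus U$. *)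

theory Defs
  imports "HOL-Probability.Probability" "HOL-Library.Landau_Symbols"
begin

text \<open>Literals: a pair (x, s) with variable index x < N; (x, True) is x, (x, False) is its negation.
  A k-CNF with M clauses is a map from positions (i, j), i < M (clause), j < k (slot), to literals.\<close>

type_synonym lit = "nat \<times> bool"
type_synonym cnf = "nat \<times> nat \<Rightarrow> lit"

definition lits :: "nat \<Rightarrow> lit set" where
  "lits N = {..<N} \<times> UNIV"

definition formulas :: "nat \<Rightarrow> nat \<Rightarrow> nat \<Rightarrow> cnf set" where
  "formulas k N M = PiE ({..<M} \<times> {..<k}) (\<lambda>_. lits N)"

definition random_formula :: "nat \<Rightarrow> nat \<Rightarrow> nat \<Rightarrow> cnf pmf" where
  "random_formula k N M = pmf_of_set (formulas k N M)"

definition lit_true :: "(nat \<Rightarrow> bool) \<Rightarrow> lit \<Rightarrow> bool" where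
  "lit_true \<sigma> l = (\<sigma> (fst l) = snd l)"

definition satisfies :: "nat \<Rightarrow> nat \<Rightarrow> cnf \<Rightarrow> (nat \<Rightarrow> bool) \<Rightarrow> bool" where
  "satisfies k M \<Phi> \<sigma> = (\<forall>i<M. \<exists>j<k. lit_true \<sigma> (\<Phi> (i, j)))"

definition degree :: "nat \<Rightarrow> cnf \<Rightarrow> nat set \<Rightarrow> lit \<Rightarrow> nat" where
  "degree k \<Phi> C l = card {(i, j). i \<in> C \<and> j < k \<and> \<Phi> (i, j) = l}"

definition deviating :: "nat \<Rightarrow> real \<Rightarrow> nat \<Rightarrow> cnf \<Rightarrow> nat set \<Rightarrow> nat set" where
  "deviating k r N \<Phi> C = {x. x < N \<and>
     max \<bar>real (degree k \<Phi> C (x, True)) - real k * r / 2\<bar>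
         \<bar>real (degree k \<Phi> C (x, False)) - real k * r / 2\<bar>
       > real k ^ 3 * 2 powr (real k / 2)}"

definition hits :: "nat \<Rightarrow> cnf \<Rightarrow> nat set \<Rightarrow> nat \<Rightarrow> nat" where
  "hits k \<Phi> U i = card {j. j < k \<and> fst (\<Phi> (i, j)) \<in> U}"

definition pr2_step :: "nat \<Rightarrow> real \<Rightarrow> nat \<Rightarrow> cnf \<Rightarrow> nat set \<times> nat set \<Rightarrow> nat set \<times> nat set" where
  "pr2_step k r N \<Phi> st =
     (let C = fst st; U = snd st in
      if \<exists>i\<in>C. hits k \<Phi> U i \<ge> 3 then
        (let C' = {i\<in>C. hits k \<Phi> U i < 3} in (C', U \<union> deviating k r N \<Phi> C'))
      else st)"

text \<open>PR1 followed by PR2. Each non-trivial round removes at least one clause, so after M rounds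
  the loop has terminated.\<close>
definition pruned :: "nat \<Rightarrow> real \<Rightarrow> nat \<Rightarrow> nat \<Rightarrow> cnf \<Rightarrow> nat set \<times> nat set" where
  "pruned k r N M \<Phi> =
     (pr2_step k r N \<Phi> ^^ M) ({..<M}, deviating k r N \<Phi> {..<M})"

text \<open>PR3: the pruned formula Phi' consists of the remaining clauses with all literals of variables
  in U deleted; it lives on V' = {x<N} - U.\<close>
definition satisfies_pruned :: "nat \<Rightarrow> real \<Rightarrow> nat \<Rightarrow> nat \<Rightarrow> cnf \<Rightarrow> (nat \<Rightarrow> bool) \<Rightarrow> bool" where
  "satisfies_pruned k r N M \<Phi> \<tau> =
     (let C = fst (pruned k r N M \<Phi>); U = snd (pruned k r N M \<Phi>) in
      \<forall>i\<in>C. \<exists>j<k. fst (\<Phi> (i, j)) \<notin> U \<and> lit_true \<tau> (\<Phi> (i, j)))"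

definition reduced_vars :: "nat \<Rightarrow> real \<Rightarrow> nat \<Rightarrow> nat \<Rightarrow> cnf \<Rightarrow> nat set" where
  "reduced_vars k r N M \<Phi> = {..<N} - snd (pruned k r N M \<Phi>)"

definition extension_property :: "nat \<Rightarrow> real \<Rightarrow> nat \<Rightarrow> nat \<Rightarrow> cnf \<Rightarrow> bool" where
  "extension_property k r N M \<Phi> =
     (\<forall>\<tau>. satisfies_pruned k r N M \<Phi> \<tau> \<longrightarrow>
        (\<exists>\<sigma>. satisfies k M \<Phi> \<sigma> \<and> (\<forall>x\<in>reduced_vars k r N M \<Phi>. \<sigma> x = \<tau> x)))"

definition clause_density :: "(nat \<Rightarrow> real) \<Rightarrow> nat \<Rightarrow> real" where
  "clause_density eps k = 2 ^ k * ln 2 - (1 + ln 2) / 2 - eps k"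

end

theory Submission
  imports Defs "HOL-Real_Asymp.Real_Asymp"
begin

text \<open>Call \<open>\<Phi>\<close> expanding if no set \<open>T\<close> of at most \<open>\<delta> N\<close> variables contains three literals of
  more than \<open>|T|\<close> clauses, and let \<open>H\<close> be the set of variables whose degrees deviate from
  \<open>k r / 2\<close> by more than half the threshold. If \<open>\<Phi>\<close> is expanding and \<open>|H| \<le> \<delta> N / 2\<close>, PR2 keeps
  \<open>|U| \<le> 2 |H|\<close>: a variable of \<open>U - H\<close> lost more than half the threshold of its occurrences to
  removed clauses, which are heavy in \<open>U\<close> and hence at most \<open>|U|\<close> many, so double counting bounds
  \<open>|U - H|\<close> by \<open>|H|\<close>. Expansion then yields Hall's condition for the removed clauses against
  their variables in \<open>U\<close>; giving each removed clause a private variable of \<open>U\<close> and setting it to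
  satisfy that clause extends any satisfying assignment of \<open>\<Phi>'\<close>.
  Expansion fails with probability \<open>O(1/N\<^sup>2)\<close> by a first-moment count, and \<open>|H| > \<delta> N / 2\<close> has
  probability \<open>O(1/N)\<close> by Chernoff bounds for the number of occurrences of a set of
  \<open>\<delta> N / 4\<close> literals, summed over all such sets.\<close>

section \<open>Hall's marriage theorem\<close>

lemma hall_condition_Diff_tight:
  assumes hall: "\<forall>S\<subseteq>I. card S \<le> card (\<Union>(A ` S))" and "finite I"
    and S0: "S0 \<subseteq> I" "card (\<Union>(A ` S0)) = card S0"
  shows "\<forall>S\<subseteq>I - S0. card S \<le> card (\<Union>i\<in>S. A i - \<Union>(A ` S0))"
proof (intro allI impI)
  fix S assume S: "S \<subseteq> I - S0"
  have "finite S" "finite S0" using S S0(1) \<open>finite I\<close> finite_subset by blast+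
  then have "card S + card S0 = card (S \<union> S0)" using S by (subst card_Un_disjoint) auto
  also have "\<dots> \<le> card (\<Union>(A ` (S \<union> S0)))" using hall S S0(1) by blast
  also have "\<Union>(A ` (S \<union> S0)) = (\<Union>i\<in>S. A i - \<Union>(A ` S0)) \<union> \<Union>(A ` S0)" by auto
  also have "card \<dots> \<le> card (\<Union>i\<in>S. A i - \<Union>(A ` S0)) + card S0"
    using card_Un_le S0(2) by metis
  finally show "card S \<le> card (\<Union>i\<in>S. A i - \<Union>(A ` S0))" by simp
qed

lemma hall_condition_Diff_point:
  assumes strict: "\<forall>S. S \<subseteq> I \<and> S \<noteq> {} \<and> S \<noteq> I \<longrightarrow> card S < card (\<Union>(A ` S))"
    and "finite I" "\<forall>i\<in>I. finite (A i)" "i0 \<in> I"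
  shows "\<forall>S\<subseteq>I - {i0}. card S \<le> card (\<Union>i\<in>S. A i - {x})"
proof (intro allI impI)
  fix S assume S: "S \<subseteq> I - {i0}"
  show "card S \<le> card (\<Union>i\<in>S. A i - {x})"
  proof (cases "S = {}")
    case False
    let ?B = "\<Union>i\<in>S. A i - {x}"
    have "finite S" using S \<open>finite I\<close> by (meson Diff_subset finite_subset subset_trans)
    then have "finite ?B" using S assms(3) by auto
    have "card S < card (\<Union>(A ` S))" using strict S False \<open>i0 \<in> I\<close> by blast
    also have "\<dots> \<le> card (insert x ?B)" using \<open>finite ?B\<close> by (intro card_mono) auto
    also have "\<dots> \<le> Suc (card ?B)" using \<open>finite ?B\<close> by (simp only: card_insert_if) simp
    finally show ?thesis by simp
  qed simp
qed

lemma inj_on_representatives_glue: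
  assumes "S0 \<subseteq> I" "inj_on f1 S0" "\<forall>i\<in>S0. f1 i \<in> A i"
    and "inj_on f2 (I - S0)" "\<forall>i\<in>I - S0. f2 i \<in> A i - X" "f1 ` S0 \<subseteq> X"
  shows "\<exists>f. inj_on f I \<and> (\<forall>i\<in>I. f i \<in> A i)"
proof -
  define g where "g i = (if i \<in> S0 then f1 i else f2 i)" for i
  have "f2 ` (I - S0) \<inter> X = {}" using assms(5) by auto
  then have "f1 ` S0 \<inter> f2 ` (I - S0) = {}" using assms(6) by blast
  with assms(2,4) have "inj_on g (S0 \<union> (I - S0))" unfolding g_def by (rule inj_on_disjoint_Un)
  moreover have "S0 \<union> (I - S0) = I" using assms(1) by blast
  ultimately have "inj_on g I" by (simp only:)
  moreover have "\<forall>i\<in>I. g i \<in> A i" using assms(3,5) unfolding g_def by auto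
  ultimately show ?thesis by (intro exI[of _ g] conjI)
qed

theorem hall_marriage:
  assumes "finite I" "\<forall>i\<in>I. finite (A i)" "\<forall>S\<subseteq>I. card S \<le> card (\<Union>(A ` S))"
  shows "\<exists>f. inj_on f I \<and> (\<forall>i\<in>I. f i \<in> A i)"
  using assms
proof (induction "card I" arbitrary: I A rule: less_induct)
  case less
  show ?case
  proof (cases "\<exists>S0. S0 \<subseteq> I \<and> S0 \<noteq> {} \<and> S0 \<noteq> I \<and> card (\<Union>(A ` S0)) = card S0")
    case True
    then obtain S0 where S0: "S0 \<subseteq> I" "S0 \<noteq> {}" "S0 \<noteq> I" "card (\<Union>(A ` S0)) = card S0"
      by blast
    define X where "X = \<Union>(A ` S0)"
    have "finite S0" using S0(1) less.prems(1) by (rule finite_subset)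
    have "card S0 < card I" using S0 less.prems(1) by (metis psubsetI psubset_card_mono)
    have "card S0 > 0" using S0(2) \<open>finite S0\<close> by (simp add: card_gt_0_iff)
    then have "card (I - S0) < card I"
      using card_Diff_subset[OF \<open>finite S0\<close> S0(1)] card_mono[OF less.prems(1) S0(1)] by linarith
    have "\<exists>f. inj_on f S0 \<and> (\<forall>i\<in>S0. f i \<in> A i)"
    proof (rule less.hyps[OF \<open>card S0 < card I\<close> \<open>finite S0\<close>])
      show "\<forall>i\<in>S0. finite (A i)" using S0(1) less.prems(2) by blast
      show "\<forall>S\<subseteq>S0. card S \<le> card (\<Union>(A ` S))" using S0(1) less.prems(3) by blast
    qed
    then obtain f1 where f1: "inj_on f1 S0" "\<forall>i\<in>S0. f1 i \<in> A i" by blast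
    have "\<exists>f. inj_on f (I - S0) \<and> (\<forall>i\<in>I - S0. f i \<in> A i - X)"
    proof (rule less.hyps[OF \<open>card (I - S0) < card I\<close>])
      show "finite (I - S0)" "\<forall>i\<in>I - S0. finite (A i - X)" using less.prems(1,2) by auto
      show "\<forall>S\<subseteq>I - S0. card S \<le> card (\<Union>i\<in>S. A i - X)"
        using hall_condition_Diff_tight[OF less.prems(3,1) S0(1,4)] unfolding X_def .
    qed
    then obtain f2 where f2: "inj_on f2 (I - S0)" "\<forall>i\<in>I - S0. f2 i \<in> A i - X" by blast
    have "f1 ` S0 \<subseteq> X" using f1(2) unfolding X_def by auto
    with S0(1) f1 f2 show ?thesis by (rule inj_on_representatives_glue)
  next
    case False
    show ?thesis
    proof (cases "I = {}")
      case False
      then obtain i0 where i0: "i0 \<in> I" by blast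
      have strict: "\<forall>S. S \<subseteq> I \<and> S \<noteq> {} \<and> S \<noteq> I \<longrightarrow> card S < card (\<Union>(A ` S))"
        using \<open>\<nexists>S0. _\<close> less.prems(3) by (metis le_neq_implies_less)
      have "card {i0} \<le> card (A i0)" using less.prems(3)[rule_format, of "{i0}"] i0 by simp
      then have "A i0 \<noteq> {}" by auto
      then obtain x where x: "x \<in> A i0" by blast
      have "card (I - {i0}) < card I" using less.prems(1) i0 by (rule card_Diff1_less)
      have "\<exists>f. inj_on f (I - {i0}) \<and> (\<forall>i\<in>I - {i0}. f i \<in> A i - {x})"
      proof (rule less.hyps[OF \<open>card (I - {i0}) < card I\<close>])
        show "finite (I - {i0})" "\<forall>i\<in>I - {i0}. finite (A i - {x})" using less.prems(1,2) by auto
        show "\<forall>S\<subseteq>I - {i0}. card S \<le> card (\<Union>i\<in>S. A i - {x})"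
          by (rule hall_condition_Diff_point[OF strict less.prems(1,2) i0])
      qed
      then obtain f2 where f2: "inj_on f2 (I - {i0})" "\<forall>i\<in>I - {i0}. f2 i \<in> A i - {x}" by blast
      show ?thesis
        by (rule inj_on_representatives_glue[of "{i0}" I "\<lambda>_. x" A f2 "{x}"]) (use i0 x f2 in auto)
    qed simp
  qed
qed

section \<open>Pruning\<close>

definition dev_threshold :: "nat \<Rightarrow> real" where
  "dev_threshold k = real k ^ 3 * 2 powr (real k / 2)"

definition half_deviating :: "nat \<Rightarrow> real \<Rightarrow> nat \<Rightarrow> nat \<Rightarrow> cnf \<Rightarrow> nat set" where
  "half_deviating k r N M \<Phi> = {x. x < N \<and>
     max \<bar>real (degree k \<Phi> {..<M} (x, True)) - real k * r / 2\<bar>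
         \<bar>real (degree k \<Phi> {..<M} (x, False)) - real k * r / 2\<bar> > dev_threshold k / 2}"

definition heavy_clauses :: "nat \<Rightarrow> nat \<Rightarrow> cnf \<Rightarrow> nat set \<Rightarrow> nat set" where
  "heavy_clauses k M \<Phi> T = {i. i < M \<and> 3 \<le> hits k \<Phi> T i}"

definition expanding :: "nat \<Rightarrow> nat \<Rightarrow> nat \<Rightarrow> real \<Rightarrow> cnf \<Rightarrow> bool" where
  "expanding k N M \<delta> \<Phi> \<longleftrightarrow>
     (\<forall>T \<subseteq> {..<N}. real (card T) \<le> \<delta> * real N \<longrightarrow> card (heavy_clauses k M \<Phi> T) \<le> card T)"

definition var_degree :: "nat \<Rightarrow> cnf \<Rightarrow> nat set \<Rightarrow> nat \<Rightarrow> nat" where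
  "var_degree k \<Phi> R x = card {(i, j). i \<in> R \<and> j < k \<and> fst (\<Phi> (i, j)) = x}"

definition clause_vars :: "nat \<Rightarrow> cnf \<Rightarrow> nat \<Rightarrow> nat set" where
  "clause_vars k \<Phi> i = (\<lambda>j. fst (\<Phi> (i, j))) ` {..<k}"

lemma hits_mono: "T \<subseteq> T' \<Longrightarrow> hits k \<Phi> T i \<le> hits k \<Phi> T' i"
  unfolding hits_def by (rule card_mono) auto

lemma finite_clause_positions: "finite R \<Longrightarrow> finite {(i, j). i \<in> R \<and> j < (k::nat) \<and> P i j}"
  by (rule finite_subset[of _ "R \<times> {..<k}"]) auto

lemma degree_split:
  assumes "C \<subseteq> A" "finite A"
  shows "degree k \<Phi> A l = degree k \<Phi> C l + degree k \<Phi> (A - C) l"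
proof -
  let ?P = "\<lambda>R. {(i, j). i \<in> R \<and> j < k \<and> \<Phi> (i, j) = l}"
  have "finite C" using assms finite_subset by auto
  then have "finite (?P C)" by (rule finite_clause_positions)
  moreover have "finite (?P (A - C))" using assms(2) by (intro finite_clause_positions) simp
  moreover have "?P A = ?P C \<union> ?P (A - C)" using assms(1) by auto
  moreover have "?P C \<inter> ?P (A - C) = {}" by auto
  ultimately show ?thesis unfolding degree_def by (simp only: card_Un_disjoint)
qed

lemma degree_le_var_degree: "finite R \<Longrightarrow> degree k \<Phi> R (x, b) \<le> var_degree k \<Phi> R x"
  unfolding degree_def var_degree_def by (rule card_mono) (auto intro: finite_clause_positions)

lemma var_degree_mono: "finite R' \<Longrightarrow> R \<subseteq> R' \<Longrightarrow> var_degree k \<Phi> R x \<le> var_degree k \<Phi> R' x"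
  unfolding var_degree_def by (rule card_mono) (auto intro: finite_clause_positions)

lemma sum_var_degree_le:
  assumes "finite R" "finite W"
  shows "(\<Sum>x\<in>W. var_degree k \<Phi> R x) \<le> k * card R"
proof -
  have "(\<Sum>x\<in>W. var_degree k \<Phi> R x) = card (\<Union>x\<in>W. {(i, j). i \<in> R \<and> j < k \<and> fst (\<Phi> (i, j)) = x})"
    unfolding var_degree_def
    by (rule card_UN_disjoint[symmetric]) (auto intro: finite_clause_positions simp: assms)
  also have "\<dots> \<le> card (R \<times> {..<k})" by (rule card_mono) (auto simp: assms)
  finally show ?thesis by (simp add: card_cartesian_product mult.commute)
qed

lemma card_mult_le_if_var_degree_gt:
  assumes "finite W" "finite R" "\<forall>x\<in>W. real (var_degree k \<Phi> R x) > a"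
  shows "real (card W) * a \<le> real k * real (card R)"
proof -
  have "real (card W) * a = (\<Sum>x\<in>W. a)" by simp
  also have "\<dots> \<le> (\<Sum>x\<in>W. real (var_degree k \<Phi> R x))"
    using assms(3) by (intro sum_mono) auto
  also have "\<dots> \<le> real (k * card R)"
    using sum_var_degree_le[OF assms(2,1)] by (simp only: of_nat_sum[symmetric] of_nat_le_iff)
  finally show ?thesis by simp
qed

text \<open>The degrees of \<open>x\<close> over all clauses are within half the threshold of \<open>k r / 2\<close>, but one of
  its degrees over \<open>C'\<close> is off by more than the threshold.\<close>
lemma var_degree_removed_gt:
  assumes "C' \<subseteq> {..<M}" "x \<in> deviating k r N \<Phi> C'" "x \<notin> half_deviating k r N M \<Phi>"
  shows "real (var_degree k \<Phi> ({..<M} - C') x) > dev_threshold k / 2"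
proof -
  let ?m = "real k * r / 2"
  have "x < N" using assms(2) unfolding deviating_def by auto
  then have "max \<bar>real (degree k \<Phi> {..<M} (x, True)) - ?m\<bar> \<bar>real (degree k \<Phi> {..<M} (x, False)) - ?m\<bar>
      \<le> dev_threshold k / 2"
    using assms(3) unfolding half_deviating_def by (simp add: not_less)
  then have near: "\<bar>real (degree k \<Phi> {..<M} (x, b)) - ?m\<bar> \<le> dev_threshold k / 2" for b
    by (cases b) (simp_all only: max.bounded_iff)
  have "max \<bar>real (degree k \<Phi> C' (x, True)) - ?m\<bar> \<bar>real (degree k \<Phi> C' (x, False)) - ?m\<bar>
      > dev_threshold k"
    using assms(2) unfolding deviating_def dev_threshold_def by auto
  then obtain b where far: "\<bar>real (degree k \<Phi> C' (x, b)) - ?m\<bar> > dev_threshold k"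
    by (metis max_def)
  have "degree k \<Phi> {..<M} (x, b) = degree k \<Phi> C' (x, b) + degree k \<Phi> ({..<M} - C') (x, b)"
    by (rule degree_split[OF assms(1)]) simp
  then have "real (degree k \<Phi> ({..<M} - C') (x, b)) > dev_threshold k / 2"
    using far near[of b] by linarith
  moreover have "degree k \<Phi> ({..<M} - C') (x, b) \<le> var_degree k \<Phi> ({..<M} - C') x"
    by (rule degree_le_var_degree) simp
  ultimately show ?thesis by linarith
qed

definition pruning_invariant :: "nat \<Rightarrow> real \<Rightarrow> nat \<Rightarrow> nat \<Rightarrow> cnf \<Rightarrow> nat set \<times> nat set \<Rightarrow> bool" where
  "pruning_invariant k r N M \<Phi> st \<longleftrightarrow> fst st \<subseteq> {..<M} \<and> snd st \<subseteq> {..<N} \<and>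
     (\<forall>i\<in>{..<M} - fst st. 3 \<le> hits k \<Phi> (snd st) i) \<and>
     (\<forall>x\<in>snd st - half_deviating k r N M \<Phi>.
        real (var_degree k \<Phi> ({..<M} - fst st) x) > dev_threshold k / 2) \<and>
     card (snd st) \<le> 2 * card (half_deviating k r N M \<Phi>)"

definition pr2_stable :: "nat \<Rightarrow> cnf \<Rightarrow> nat set \<times> nat set \<Rightarrow> bool" where
  "pr2_stable k \<Phi> st \<longleftrightarrow> (\<forall>i\<in>fst st. hits k \<Phi> (snd st) i < 3)"

lemma finite_half_deviating: "finite (half_deviating k r N M \<Phi>)"
  by (rule finite_subset[of _ "{..<N}"]) (auto simp: half_deviating_def)

text \<open>Double counting the occurrences of the new variables in the removed clauses, whose
  number is controlled by expansion.\<close>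
lemma card_pruned_vars_le:
  assumes "expanding k N M \<delta> \<Phi>" and "2 * real (card (half_deviating k r N M \<Phi>)) \<le> \<delta> * real N"
    and "4 * real k \<le> dev_threshold k" "dev_threshold k > 0"
    and "pruning_invariant k r N M \<Phi> (C, U)" and "{..<M} - C' \<subseteq> heavy_clauses k M \<Phi> U"
    and "W \<subseteq> {..<N}" "\<forall>x\<in>W. real (var_degree k \<Phi> ({..<M} - C') x) > dev_threshold k / 2"
  shows "card W \<le> card (half_deviating k r N M \<Phi>)"
proof -
  define H where "H = half_deviating k r N M \<Phi>"
  have U: "U \<subseteq> {..<N}" "card U \<le> 2 * card H"
    using assms(5) unfolding pruning_invariant_def H_def by auto
  then have "real (card U) \<le> \<delta> * real N" using assms(2) unfolding H_def by linarith
  then have "card (heavy_clauses k M \<Phi> U) \<le> card U" using assms(1) U(1) unfolding expanding_def by blast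
  moreover have "card ({..<M} - C') \<le> card (heavy_clauses k M \<Phi> U)"
    using assms(6) by (rule card_mono[rotated]) (simp add: heavy_clauses_def)
  ultimately have removed: "real (card ({..<M} - C')) \<le> 2 * real (card H)" using U(2) by linarith
  have "finite W" using assms(7) finite_subset by blast
  then have "real (card W) * (dev_threshold k / 2) \<le> real k * real (card ({..<M} - C'))"
    using assms(8) by (intro card_mult_le_if_var_degree_gt) auto
  also have "\<dots> \<le> real k * (2 * real (card H))" using removed by (intro mult_left_mono) auto
  also have "\<dots> \<le> real (card H) * (dev_threshold k / 2)"
    using mult_right_mono[OF assms(3), of "real (card H)"] by (simp add: field_simps)
  finally show ?thesis unfolding H_def using assms(4) by (simp add: mult_le_cancel_right_pos)
qed

lemma var_degree_gt_pr2_step: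
  assumes "C' \<subseteq> C" "C \<subseteq> {..<M}"
    and "\<forall>x\<in>U - half_deviating k r N M \<Phi>. real (var_degree k \<Phi> ({..<M} - C) x) > dev_threshold k / 2"
  shows "\<forall>x\<in>(U \<union> deviating k r N \<Phi> C') - half_deviating k r N M \<Phi>.
           real (var_degree k \<Phi> ({..<M} - C') x) > dev_threshold k / 2"
proof
  fix x assume x: "x \<in> (U \<union> deviating k r N \<Phi> C') - half_deviating k r N M \<Phi>"
  show "real (var_degree k \<Phi> ({..<M} - C') x) > dev_threshold k / 2"
  proof (cases "x \<in> U")
    case True
    have "var_degree k \<Phi> ({..<M} - C) x \<le> var_degree k \<Phi> ({..<M} - C') x"
      using assms(1) by (intro var_degree_mono) auto
    moreover have "real (var_degree k \<Phi> ({..<M} - C) x) > dev_threshold k / 2"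
      using assms(3) x True by blast
    ultimately show ?thesis by linarith
  next
    case False
    have "C' \<subseteq> {..<M}" using assms(1,2) by (rule order_trans)
    moreover have "x \<in> deviating k r N \<Phi> C'" "x \<notin> half_deviating k r N M \<Phi>" using x False by auto
    ultimately show ?thesis by (rule var_degree_removed_gt)
  qed
qed

lemma pruning_invariant_pr2_step:
  assumes "expanding k N M \<delta> \<Phi>" and "2 * real (card (half_deviating k r N M \<Phi>)) \<le> \<delta> * real N"
    and "4 * real k \<le> dev_threshold k" "dev_threshold k > 0"
    and inv: "pruning_invariant k r N M \<Phi> st"
  shows "pruning_invariant k r N M \<Phi> (pr2_step k r N \<Phi> st)"
proof (cases "pr2_stable k \<Phi> st")
  case True
  then show ?thesis using inv unfolding pr2_step_def pr2_stable_def by (auto simp: Let_def not_le)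
next
  case False
  obtain C U where st: "st = (C, U)" by (cases st)
  define H where "H = half_deviating k r N M \<Phi>"
  define C' where "C' = {i\<in>C. hits k \<Phi> U i < 3}"
  define U' where "U' = U \<union> deviating k r N \<Phi> C'"
  have step: "pr2_step k r N \<Phi> st = (C', U')"
    using False unfolding pr2_step_def pr2_stable_def st C'_def U'_def by (auto simp: Let_def not_less)
  have inv': "C \<subseteq> {..<M}" "U \<subseteq> {..<N}" "\<forall>i\<in>{..<M} - C. 3 \<le> hits k \<Phi> U i"
    "\<forall>x\<in>U - H. real (var_degree k \<Phi> ({..<M} - C) x) > dev_threshold k / 2"
    using inv unfolding pruning_invariant_def st H_def by auto
  have "C' \<subseteq> {..<M}" using inv'(1) C'_def by auto
  have "U' \<subseteq> {..<N}" using inv'(2) unfolding U'_def deviating_def by auto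
  have removed_heavy: "{..<M} - C' \<subseteq> heavy_clauses k M \<Phi> U"
    using inv'(3) unfolding C'_def heavy_clauses_def by auto
  have hits': "\<forall>i\<in>{..<M} - C'. 3 \<le> hits k \<Phi> U' i"
  proof
    fix i assume "i \<in> {..<M} - C'"
    then have "3 \<le> hits k \<Phi> U i" using removed_heavy unfolding heavy_clauses_def by auto
    also have "\<dots> \<le> hits k \<Phi> U' i" by (rule hits_mono) (simp add: U'_def)
    finally show "3 \<le> hits k \<Phi> U' i" .
  qed
  have "C' \<subseteq> C" unfolding C'_def by auto
  then have var_degree': "\<forall>x\<in>U' - H. real (var_degree k \<Phi> ({..<M} - C') x) > dev_threshold k / 2"
    unfolding U'_def H_def by (rule var_degree_gt_pr2_step[OF _ inv'(1) inv'(4)[unfolded H_def]])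
  have "card (U' - H) \<le> card H"
    using card_pruned_vars_le[OF assms(1-4) inv[unfolded st] removed_heavy _ var_degree'] \<open>U' \<subseteq> {..<N}\<close>
    unfolding H_def by blast
  moreover have "card U' \<le> card (H \<union> (U' - H))"
    using finite_half_deviating finite_subset[OF \<open>U' \<subseteq> {..<N}\<close> finite_lessThan] unfolding H_def
    by (intro card_mono) auto
  moreover have "card (H \<union> (U' - H)) \<le> card H + card (U' - H)" by (rule card_Un_le)
  ultimately show ?thesis
    unfolding pruning_invariant_def step H_def
    using \<open>C' \<subseteq> {..<M}\<close> \<open>U' \<subseteq> {..<N}\<close> hits' var_degree' by (auto simp: H_def)
qed

lemma card_fst_pr2_step_less:
  assumes "finite (fst st)" "\<not> pr2_stable k \<Phi> st"
  shows "card (fst (pr2_step k r N \<Phi> st)) < card (fst st)"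
proof -
  obtain i where i: "i \<in> fst st" "3 \<le> hits k \<Phi> (snd st) i"
    using assms(2) unfolding pr2_stable_def by auto
  then have "fst (pr2_step k r N \<Phi> st) = {i\<in>fst st. hits k \<Phi> (snd st) i < 3}"
    unfolding pr2_step_def by (auto simp: Let_def)
  also have "\<dots> \<subset> fst st"
  proof -
    have "i \<notin> {i\<in>fst st. hits k \<Phi> (snd st) i < 3}" using i by simp
    then show ?thesis using i by blast
  qed
  finally show ?thesis using assms(1) by (rule psubset_card_mono[rotated])
qed

text \<open>Each non-stable round of PR2 removes a clause, so after \<open>M\<close> rounds the state is stable.\<close>
lemma pruned_invariant:
  assumes "expanding k N M \<delta> \<Phi>" and "2 * real (card (half_deviating k r N M \<Phi>)) \<le> \<delta> * real N"
    and "4 * real k \<le> dev_threshold k" "dev_threshold k > 0"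
  shows "pruning_invariant k r N M \<Phi> (pruned k r N M \<Phi>)" "pr2_stable k \<Phi> (pruned k r N M \<Phi>)"
proof -
  define st0 where "st0 = ({..<M}, deviating k r N \<Phi> {..<M})"
  let ?st = "\<lambda>m. (pr2_step k r N \<Phi> ^^ m) st0"
  have "pruning_invariant k r N M \<Phi> (?st m) \<and>
      (pr2_stable k \<Phi> (?st m) \<or> card (fst (?st m)) + m \<le> M)" for m
  proof (induction m)
    case 0
    have "deviating k r N \<Phi> {..<M} \<subseteq> half_deviating k r N M \<Phi>"
      using assms(4) unfolding deviating_def half_deviating_def dev_threshold_def by auto
    moreover from this have "card (deviating k r N \<Phi> {..<M}) \<le> card (half_deviating k r N M \<Phi>)"
      by (rule card_mono[OF finite_half_deviating])
    ultimately show ?case unfolding pruning_invariant_def st0_def by (auto simp: deviating_def)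
  next
    case (Suc m)
    have inv: "pruning_invariant k r N M \<Phi> (?st (Suc m))"
      using pruning_invariant_pr2_step[OF assms] Suc by simp
    show ?case
    proof (cases "pr2_stable k \<Phi> (?st m)")
      case True
      then have "pr2_step k r N \<Phi> (?st m) = ?st m"
        unfolding pr2_step_def pr2_stable_def by (auto simp: Let_def not_le)
      then show ?thesis using inv True by simp
    next
      case False
      have "finite (fst (?st m))" using Suc unfolding pruning_invariant_def using finite_subset by blast
      then have "card (fst (?st (Suc m))) < card (fst (?st m))"
        using card_fst_pr2_step_less[OF _ False] by simp
      then show ?thesis using inv Suc False by auto
    qed
  qed
  note P = this
  have eq: "pruned k r N M \<Phi> = ?st M" unfolding pruned_def st0_def ..
  show inv: "pruning_invariant k r N M \<Phi> (pruned k r N M \<Phi>)" using P[of M] unfolding eq by simp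
  have "finite (fst (pruned k r N M \<Phi>))"
    using inv unfolding pruning_invariant_def using finite_subset by blast
  then show "pr2_stable k \<Phi> (pruned k r N M \<Phi>)"
    using P[of M] unfolding eq[symmetric] by (auto simp: pr2_stable_def)
qed

lemma hall_condition_removed_clauses:
  assumes "expanding k N M \<delta> \<Phi>" "U \<subseteq> {..<N}" "real (card U) \<le> \<delta> * real N"
    and "R \<subseteq> {..<M}" "\<forall>i\<in>R. 3 \<le> hits k \<Phi> U i"
  shows "\<forall>S\<subseteq>R. card S \<le> card (\<Union>i\<in>S. U \<inter> clause_vars k \<Phi> i)"
proof (intro allI impI)
  fix S assume "S \<subseteq> R"
  define T where "T = (\<Union>i\<in>S. U \<inter> clause_vars k \<Phi> i)"
  have "T \<subseteq> U" unfolding T_def by auto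
  then have "card T \<le> card U" using finite_subset[OF assms(2) finite_lessThan] by (rule card_mono[rotated])
  then have "real (card T) \<le> \<delta> * real N" using assms(3) by linarith
  then have "card (heavy_clauses k M \<Phi> T) \<le> card T"
    using assms(1,2) \<open>T \<subseteq> U\<close> unfolding expanding_def by (meson order_trans)
  moreover have "S \<subseteq> heavy_clauses k M \<Phi> T"
  proof
    fix i assume "i \<in> S"
    have "fst (\<Phi> (i, j)) \<in> T" if "j < k" "fst (\<Phi> (i, j)) \<in> U" for j
      unfolding T_def clause_vars_def using that by (intro UN_I[OF \<open>i \<in> S\<close>] IntI rev_image_eqI[of j]) simp_all
    then have "{j. j < k \<and> fst (\<Phi> (i, j)) \<in> U} = {j. j < k \<and> fst (\<Phi> (i, j)) \<in> T}"
      using \<open>T \<subseteq> U\<close> by auto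
    then have "hits k \<Phi> U i = hits k \<Phi> T i" unfolding hits_def by simp
    moreover have "i \<in> R" using \<open>i \<in> S\<close> \<open>S \<subseteq> R\<close> by blast
    ultimately show "i \<in> heavy_clauses k M \<Phi> T"
      using assms(4,5) unfolding heavy_clauses_def by auto
  qed
  then have "card S \<le> card (heavy_clauses k M \<Phi> T)"
    by (rule card_mono[rotated]) (simp add: heavy_clauses_def)
  ultimately show "card S \<le> card (\<Union>i\<in>S. U \<inter> clause_vars k \<Phi> i)" unfolding T_def by linarith
qed

lemma satisfies_extend:
  assumes sat: "\<forall>i\<in>C. \<exists>j<k. fst (\<Phi> (i, j)) \<notin> U \<and> lit_true \<tau> (\<Phi> (i, j))"
    and f: "inj_on f ({..<M} - C)" "\<forall>i\<in>{..<M} - C. f i \<in> U \<inter> clause_vars k \<Phi> i"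
  shows "\<exists>\<sigma>. satisfies k M \<Phi> \<sigma> \<and> (\<forall>x. x \<notin> U \<longrightarrow> \<sigma> x = \<tau> x)"
proof -
  define R where "R = {..<M} - C"
  define J where "J i = (SOME j. j < k \<and> fst (\<Phi> (i, j)) = f i)" for i
  have J: "J i < k \<and> fst (\<Phi> (i, J i)) = f i" if "i \<in> R" for i
  proof -
    have "f i \<in> clause_vars k \<Phi> i" using f(2) that unfolding R_def by auto
    then obtain j where "j < k" "fst (\<Phi> (i, j)) = f i" unfolding clause_vars_def by auto
    then have "\<exists>j. j < k \<and> fst (\<Phi> (i, j)) = f i" by blast
    then show ?thesis unfolding J_def by (rule someI_ex)
  qed
  define g where "g = the_inv_into R f"
  define \<sigma> where "\<sigma> x = (if x \<in> f ` R then snd (\<Phi> (g x, J (g x))) else \<tau> x)" for x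
  have "f ` R \<subseteq> U" using f(2) unfolding R_def by auto
  have "\<exists>j<k. lit_true \<sigma> (\<Phi> (i, j))" if "i < M" for i
  proof (cases "i \<in> C")
    case True
    then obtain j where j: "j < k" "fst (\<Phi> (i, j)) \<notin> U" "lit_true \<tau> (\<Phi> (i, j))" using sat by auto
    then have "fst (\<Phi> (i, j)) \<notin> f ` R" using \<open>f ` R \<subseteq> U\<close> by auto
    then have "lit_true \<sigma> (\<Phi> (i, j))" using j(3) unfolding lit_true_def \<sigma>_def by simp
    then show ?thesis using j(1) by auto
  next
    case False
    then have "i \<in> R" using that R_def by auto
    have "g (f i) = i" unfolding g_def using the_inv_into_f_f[OF f(1)] \<open>i \<in> R\<close> R_def by simp
    then have "lit_true \<sigma> (\<Phi> (i, J i))" unfolding lit_true_def \<sigma>_def using J[OF \<open>i \<in> R\<close>] \<open>i \<in> R\<close> by auto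
    then show ?thesis using J[OF \<open>i \<in> R\<close>] by auto
  qed
  then have "satisfies k M \<Phi> \<sigma>" unfolding satisfies_def by blast
  moreover have "\<forall>x. x \<notin> U \<longrightarrow> \<sigma> x = \<tau> x" using \<open>f ` R \<subseteq> U\<close> unfolding \<sigma>_def by auto
  ultimately show ?thesis by blast
qed

lemma extension_property_if_expanding:
  assumes "expanding k N M \<delta> \<Phi>" and "2 * real (card (half_deviating k r N M \<Phi>)) \<le> \<delta> * real N"
    and "4 * real k \<le> dev_threshold k" "dev_threshold k > 0"
  shows "extension_property k r N M \<Phi>"
  unfolding extension_property_def
proof (intro allI impI)
  fix \<tau> assume "satisfies_pruned k r N M \<Phi> \<tau>"
  obtain C U where CU: "pruned k r N M \<Phi> = (C, U)" by (cases "pruned k r N M \<Phi>")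
  have inv: "C \<subseteq> {..<M}" "U \<subseteq> {..<N}" "\<forall>i\<in>{..<M} - C. 3 \<le> hits k \<Phi> U i"
     "card U \<le> 2 * card (half_deviating k r N M \<Phi>)"
    using pruned_invariant(1)[OF assms] CU unfolding pruning_invariant_def by auto
  then have "real (card U) \<le> \<delta> * real N" using assms(2) by linarith
  with assms(1) inv(2) have hall: "\<forall>S\<subseteq>{..<M} - C. card S \<le> card (\<Union>i\<in>S. U \<inter> clause_vars k \<Phi> i)"
    by (rule hall_condition_removed_clauses) (use inv(3) in auto)
  have "finite U" using inv(2) by (rule finite_subset) simp
  then obtain f where f: "inj_on f ({..<M} - C)" "\<forall>i\<in>{..<M} - C. f i \<in> U \<inter> clause_vars k \<Phi> i"
    using hall_marriage[OF _ _ hall] by auto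
  have sat: "\<forall>i\<in>C. \<exists>j<k. fst (\<Phi> (i, j)) \<notin> U \<and> lit_true \<tau> (\<Phi> (i, j))"
    using \<open>satisfies_pruned k r N M \<Phi> \<tau>\<close> CU unfolding satisfies_pruned_def by (simp add: Let_def)
  obtain \<sigma> where "satisfies k M \<Phi> \<sigma>" "\<forall>x. x \<notin> U \<longrightarrow> \<sigma> x = \<tau> x"
    using satisfies_extend[OF sat f] by blast
  then show "\<exists>\<sigma>. satisfies k M \<Phi> \<sigma> \<and> (\<forall>x\<in>reduced_vars k r N M \<Phi>. \<sigma> x = \<tau> x)"
    using CU unfolding reduced_vars_def by auto
qed

section \<open>Counting formulas\<close>

definition positions :: "nat \<Rightarrow> nat \<Rightarrow> (nat \<times> nat) set" where
  "positions k M = {..<M} \<times> {..<k}"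

lemma card_lits: "card (lits N) = 2 * N"
  unfolding lits_def by (simp add: card_cartesian_product)

lemma finite_lits: "finite (lits N)"
  unfolding lits_def by simp

lemma finite_positions: "finite (positions k M)" unfolding positions_def by simp

lemma card_positions: "card (positions k M) = M * k" unfolding positions_def by (simp add: card_cartesian_product)

lemma formulas_eq_PiE: "formulas k N M = PiE (positions k M) (\<lambda>_. lits N)"
  unfolding formulas_def positions_def by simp

lemma finite_formulas: "finite (formulas k N M)"
  unfolding formulas_eq_PiE by (intro finite_PiE finite_positions finite_lits)

lemma card_formulas: "card (formulas k N M) = (2 * N) ^ (M * k)"
  unfolding formulas_eq_PiE by (simp add: card_PiE finite_positions card_lits card_positions)

lemma card_formulas_restricted:
  assumes "P \<subseteq> positions k M" "B \<subseteq> lits N"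
  shows "card {\<Phi>\<in>formulas k N M. \<forall>p\<in>P. \<Phi> p \<in> B} = card B ^ card P * (2 * N) ^ (M * k - card P)"
proof -
  have "{\<Phi>\<in>formulas k N M. \<forall>p\<in>P. \<Phi> p \<in> B} = PiE (positions k M) (\<lambda>p. if p \<in> P then B else lits N)"
    unfolding formulas_eq_PiE using assms by (auto simp: PiE_iff extensional_def split: if_splits; blast)
  then have "card {\<Phi>\<in>formulas k N M. \<forall>p\<in>P. \<Phi> p \<in> B} = (\<Prod>p\<in>positions k M. card (if p \<in> P then B else lits N))"
    by (simp add: card_PiE finite_positions)
  also have "\<dots> = (\<Prod>p\<in>positions k M. if p \<in> P then card B else 2 * N)"
    by (intro prod.cong) (auto simp: card_lits)
  also have "\<dots> = (\<Prod>p\<in>P. card B) * (\<Prod>p\<in>positions k M - P. 2 * N)"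
    using prod.If_cases[OF finite_positions, of "\<lambda>p. p \<in> P" "\<lambda>_. card B" "\<lambda>_. 2 * N" k M] assms(1)
    by (simp add: Int_absorb1 Diff_eq)
  also have "\<dots> = card B ^ card P * (2 * N) ^ (M * k - card P)"
    using assms(1) finite_positions by (simp add: card_Diff_subset card_positions finite_subset)
  finally show ?thesis .
qed

lemma prob_random_formula:
  assumes "N > 0"
  shows "measure_pmf.prob (random_formula k N M) E = real (card (formulas k N M \<inter> E)) / real (card (formulas k N M))"
proof -
  have "formulas k N M \<noteq> {}" unfolding formulas_eq_PiE using assms
    by (auto simp add: PiE_eq_empty_iff lits_def)
  then show ?thesis unfolding random_formula_def by (simp add: measure_pmf_of_set finite_formulas)
qed

section \<open>Expansion\<close>

definition hit_event :: "nat \<Rightarrow> nat \<Rightarrow> nat \<Rightarrow> nat set \<Rightarrow> nat set \<Rightarrow> (nat \<Rightarrow> nat set) \<Rightarrow> cnf set" where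
  "hit_event k N M T S Jf = {\<Phi>\<in>formulas k N M. \<forall>p\<in>Sigma S Jf. \<Phi> p \<in> T \<times> UNIV}"

definition triples :: "nat \<Rightarrow> nat set set" where
  "triples k = {J. J \<subseteq> {..<k} \<and> card J = 3}"

lemma triple_if_hits:
  assumes "3 \<le> hits k \<Phi> T i"
  shows "\<exists>J\<in>triples k. \<forall>j\<in>J. fst (\<Phi> (i, j)) \<in> T"
proof -
  obtain J where "J \<subseteq> {j. j < k \<and> fst (\<Phi> (i, j)) \<in> T}" "card J = 3"
    using obtain_subset_with_card_n[of 3 "{j. j < k \<and> fst (\<Phi> (i, j)) \<in> T}"] assms
    unfolding hits_def by auto
  then show ?thesis unfolding triples_def by (intro bexI[of _ J]) auto
qed

lemma non_expanding_subset:
  "formulas k N M - {\<Phi>. expanding k N M \<delta> \<Phi>} \<subseteq>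
    (\<Union>t\<in>{1..nat \<lfloor>\<delta> * real N\<rfloor>}. \<Union>T\<in>{T. T \<subseteq> {..<N} \<and> card T = t}.
      \<Union>S\<in>{S. S \<subseteq> {..<M} \<and> card S = Suc t}. \<Union>Jf\<in>PiE S (\<lambda>_. triples k). hit_event k N M T S Jf)"
proof
  fix \<Phi> assume \<Phi>: "\<Phi> \<in> formulas k N M - {\<Phi>. expanding k N M \<delta> \<Phi>}"
  then obtain T where T: "T \<subseteq> {..<N}" "real (card T) \<le> \<delta> * real N"
      "card (heavy_clauses k M \<Phi> T) > card T"
    unfolding expanding_def by auto
  define t where "t = card T"
  have "T \<noteq> {}" using T(3) unfolding heavy_clauses_def hits_def by auto
  then have t: "t \<in> {1..nat \<lfloor>\<delta> * real N\<rfloor>}"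
    using T(1,2) finite_subset[OF T(1) finite_lessThan] unfolding t_def
    by (simp add: Suc_leI card_gt_0_iff le_nat_floor)
  obtain S where S: "S \<subseteq> heavy_clauses k M \<Phi> T" "card S = Suc t"
    using obtain_subset_with_card_n[of "Suc t" "heavy_clauses k M \<Phi> T"] T(3) unfolding t_def by auto
  have "\<forall>i\<in>S. \<exists>J\<in>triples k. \<forall>j\<in>J. fst (\<Phi> (i, j)) \<in> T"
    using S(1) triple_if_hits unfolding heavy_clauses_def by blast
  then obtain Jf where Jf: "\<forall>i\<in>S. Jf i \<in> triples k \<and> (\<forall>j\<in>Jf i. fst (\<Phi> (i, j)) \<in> T)"
    by metis
  have Jf_mem: "restrict Jf S \<in> PiE S (\<lambda>_. triples k)" using Jf by auto
  have hit: "\<Phi> \<in> hit_event k N M T S (restrict Jf S)"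
    using \<Phi> Jf unfolding hit_event_def by (auto simp: mem_Times_iff)
  have T_mem: "T \<in> {T. T \<subseteq> {..<N} \<and> card T = t}" using T(1) unfolding t_def by auto
  have S_mem: "S \<in> {S. S \<subseteq> {..<M} \<and> card S = Suc t}" using S unfolding heavy_clauses_def by auto
  have "\<Phi> \<in> (\<Union>Jf\<in>PiE S (\<lambda>_. triples k). hit_event k N M T S Jf)" using Jf_mem hit by blast
  then have "\<Phi> \<in> (\<Union>S\<in>{S. S \<subseteq> {..<M} \<and> card S = Suc t}. \<Union>Jf\<in>PiE S (\<lambda>_. triples k). hit_event k N M T S Jf)"
    by (rule UN_I[OF S_mem])
  then have "\<Phi> \<in> (\<Union>T\<in>{T. T \<subseteq> {..<N} \<and> card T = t}.
      \<Union>S\<in>{S. S \<subseteq> {..<M} \<and> card S = Suc t}. \<Union>Jf\<in>PiE S (\<lambda>_. triples k). hit_event k N M T S Jf)"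
    by (rule UN_I[OF T_mem])
  then show "\<Phi> \<in> (\<Union>t\<in>{1..nat \<lfloor>\<delta> * real N\<rfloor>}. \<Union>T\<in>{T. T \<subseteq> {..<N} \<and> card T = t}.
      \<Union>S\<in>{S. S \<subseteq> {..<M} \<and> card S = Suc t}. \<Union>Jf\<in>PiE S (\<lambda>_. triples k). hit_event k N M T S Jf)"
    by (rule UN_I[OF t])
qed

lemma card_hit_event:
  assumes "T \<subseteq> {..<N}" "card T = t" "S \<subseteq> {..<M}" "card S = Suc t" "Jf \<in> PiE S (\<lambda>_. triples k)" "N > 0"
  shows "real (card (hit_event k N M T S Jf)) = real (card (formulas k N M)) * (real t / real N) ^ (3 * Suc t)"
proof -
  have fS: "finite S" using assms(3) finite_subset by auto
  have P: "Sigma S Jf \<subseteq> positions k M" using assms(3,5) unfolding positions_def triples_def by (auto simp: PiE_iff)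
  have B: "T \<times> (UNIV::bool set) \<subseteq> lits N" using assms(1) unfolding lits_def by auto
  have cP: "card (Sigma S Jf) = 3 * Suc t"
  proof -
    have "card (Sigma S Jf) = (\<Sum>i\<in>S. card (Jf i))"
      using fS assms(5) unfolding triples_def by (intro card_SigmaI) (auto simp: PiE_iff finite_subset)
    also have "\<dots> = (\<Sum>i\<in>S. 3)" using assms(5) unfolding triples_def by (intro sum.cong) (auto simp: PiE_iff)
    finally show ?thesis using assms(4) by simp
  qed
  have cB: "card (T \<times> (UNIV::bool set)) = 2 * t" using assms(2) by (simp add: card_cartesian_product mult.commute)
  have le: "3 * Suc t \<le> M * k" using card_mono[OF finite_positions P] cP card_positions by simp
  have "card (hit_event k N M T S Jf) = (2 * t) ^ (3 * Suc t) * (2 * N) ^ (M * k - 3 * Suc t)"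
    unfolding hit_event_def using card_formulas_restricted[OF P B] cP cB by simp
  then have "real (card (hit_event k N M T S Jf)) = (2 * real t) ^ (3 * Suc t) * (2 * real N) ^ (M * k - 3 * Suc t)"
    by simp
  also have "\<dots> = (2 * real N) ^ (M * k) * (real t / real N) ^ (3 * Suc t)"
  proof -
    have "(2 * real N) ^ (M * k) = (2 * real N) ^ (3 * Suc t) * (2 * real N) ^ (M * k - 3 * Suc t)"
    proof -
      have "(2 * real N) ^ (M * k) = (2 * real N) ^ (3 * Suc t + (M * k - 3 * Suc t))" using le by simp
      then show ?thesis by (simp only: power_add)
    qed
    moreover have "(2 * real t) ^ (3 * Suc t) = (2 * real N) ^ (3 * Suc t) * (real t / real N) ^ (3 * Suc t)"
      using assms(6) by (simp add: power_divide power_mult_distrib)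
    ultimately show ?thesis by simp
  qed
  finally show ?thesis by (simp add: card_formulas)
qed

lemma real_card_UN_le: "finite I \<Longrightarrow> real (card (\<Union>i\<in>I. A i)) \<le> (\<Sum>i\<in>I. real (card (A i)))"
  using card_UN_le[of I A] by (metis of_nat_le_iff of_nat_sum)

lemma card_triples: "card (triples k) = k choose 3"
  unfolding triples_def using n_subsets[of "{..<k}" 3] by simp

lemma finite_triples: "finite (triples k)"
  unfolding triples_def by (rule finite_subset[of _ "Pow {..<k}"]) auto

lemma sum_witnesses_const:
  "(\<Sum>T\<in>{T. T \<subseteq> {..<N} \<and> card T = t}. \<Sum>S\<in>{S. S \<subseteq> {..<M} \<and> card S = Suc t}.
      \<Sum>Jf\<in>PiE S (\<lambda>_. triples k). a)
    = real (N choose t) * real (M choose Suc t) * real (k choose 3) ^ Suc t * (a :: real)"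
proof -
  have "card (PiE S (\<lambda>_. triples k)) = (k choose 3) ^ Suc t"
    if "S \<in> {S. S \<subseteq> {..<M} \<and> card S = Suc t}" for S
    using that finite_subset[of S "{..<M}"] by (simp add: card_PiE card_triples)
  then have "(\<Sum>S\<in>{S. S \<subseteq> {..<M} \<and> card S = Suc t}. \<Sum>Jf\<in>PiE S (\<lambda>_. triples k). a)
      = real (M choose Suc t) * (real (k choose 3) ^ Suc t * a)"
    using n_subsets[of "{..<M}" "Suc t"] by simp
  then show ?thesis using n_subsets[of "{..<N}" t] by simp
qed

lemma card_non_expanding_le:
  assumes "N > 0"
  shows "real (card (formulas k N M - {\<Phi>. expanding k N M \<delta> \<Phi>})) \<le> real (card (formulas k N M)) *
     (\<Sum>t\<in>{1..nat \<lfloor>\<delta> * real N\<rfloor>}. real (N choose t) * real (M choose Suc t) * real (k choose 3) ^ Suc t *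
        (real t / real N) ^ (3 * Suc t))"
proof -
  define F where "F = formulas k N M"
  define c where "c t = real (card F) * (real t / real N) ^ (3 * Suc t)" for t :: nat
  define Ts where "Ts t = {T. T \<subseteq> {..<N} \<and> card T = t}" for t
  define Ss where "Ss t = {S. S \<subseteq> {..<M} \<and> card S = Suc t}" for t
  define U where "U = (\<Union>t\<in>{1..nat \<lfloor>\<delta> * real N\<rfloor>}. \<Union>T\<in>Ts t. \<Union>S\<in>Ss t. \<Union>Jf\<in>PiE S (\<lambda>_. triples k). hit_event k N M T S Jf)"
  have fTs: "finite (Ts t)" for t unfolding Ts_def by (rule finite_subset[of _ "Pow {..<N}"]) auto
  have fSs: "finite (Ss t)" for t unfolding Ss_def by (rule finite_subset[of _ "Pow {..<M}"]) auto
  have fPi: "S \<in> Ss t \<Longrightarrow> finite (PiE S (\<lambda>_. triples k))" for S t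
    unfolding Ss_def by (intro finite_PiE finite_triples) (auto intro: finite_subset)
  have sub: "F - {\<Phi>. expanding k N M \<delta> \<Phi>} \<subseteq> U" unfolding F_def U_def Ts_def Ss_def by (rule non_expanding_subset)
  have UF: "U \<subseteq> F" unfolding U_def F_def hit_event_def by auto
  have "real (card (F - {\<Phi>. expanding k N M \<delta> \<Phi>})) \<le> real (card U)"
    using card_mono[OF finite_subset[OF UF] sub] unfolding F_def by (simp add: finite_formulas)
  also have "\<dots> \<le> (\<Sum>t\<in>{1..nat \<lfloor>\<delta> * real N\<rfloor>}. real (card (\<Union>T\<in>Ts t. \<Union>S\<in>Ss t. \<Union>Jf\<in>PiE S (\<lambda>_. triples k). hit_event k N M T S Jf)))"
    unfolding U_def by (rule real_card_UN_le) simp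
  also have "\<dots> \<le> (\<Sum>t\<in>{1..nat \<lfloor>\<delta> * real N\<rfloor>}. \<Sum>T\<in>Ts t. real (card (\<Union>S\<in>Ss t. \<Union>Jf\<in>PiE S (\<lambda>_. triples k). hit_event k N M T S Jf)))"
    by (intro sum_mono real_card_UN_le fTs)
  also have "\<dots> \<le> (\<Sum>t\<in>{1..nat \<lfloor>\<delta> * real N\<rfloor>}. \<Sum>T\<in>Ts t. \<Sum>S\<in>Ss t. real (card (\<Union>Jf\<in>PiE S (\<lambda>_. triples k). hit_event k N M T S Jf)))"
    by (intro sum_mono real_card_UN_le fSs)
  also have "\<dots> \<le> (\<Sum>t\<in>{1..nat \<lfloor>\<delta> * real N\<rfloor>}. \<Sum>T\<in>Ts t. \<Sum>S\<in>Ss t. \<Sum>Jf\<in>PiE S (\<lambda>_. triples k). real (card (hit_event k N M T S Jf)))"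
    by (intro sum_mono real_card_UN_le fPi)
  also have "\<dots> = (\<Sum>t\<in>{1..nat \<lfloor>\<delta> * real N\<rfloor>}. \<Sum>T\<in>Ts t. \<Sum>S\<in>Ss t. \<Sum>Jf\<in>PiE S (\<lambda>_. triples k). c t)"
    unfolding c_def F_def Ts_def Ss_def
    by (intro sum.cong refl) (use card_hit_event[OF _ _ _ _ _ assms] in auto)
  also have "\<dots> = (\<Sum>t\<in>{1..nat \<lfloor>\<delta> * real N\<rfloor>}. real (N choose t) * real (M choose Suc t) * real (k choose 3) ^ Suc t * c t)"
    unfolding Ts_def Ss_def by (simp only: sum_witnesses_const)
  finally show ?thesis unfolding F_def c_def by (simp add: sum_distrib_left ac_simps)
qed

lemma power_div_fact_le_exp:
  fixes x :: real assumes "x \<ge> 0" shows "x ^ n / fact n \<le> exp x"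
proof -
  have "x ^ n / fact n = (\<Sum>i\<in>{n}. x ^ i / fact i)" by simp
  also have "\<dots> \<le> (\<Sum>i. x ^ i / fact i)"
    using summable_exp_generic[of x] assms by (intro sum_le_suminf) (auto simp: divide_inverse ac_simps)
  also have "\<dots> = exp x" by (simp add: exp_def divide_inverse ac_simps)
  finally show ?thesis .
qed

lemma binomial_le_power_div_fact: "real (n choose t) \<le> real n ^ t / fact t"
proof -
  have "real ((n choose t) * fact t) \<le> real (n ^ t)" using binomial_fact_pow[of n t] by (simp only: of_nat_le_iff)
  then have "real (n choose t) * fact t \<le> real n ^ t" by simp
  then show ?thesis by (simp add: field_simps)
qed

lemma square_le_four_power: "real t ^ 2 \<le> 4 ^ t"
proof -
  have "real t \<le> 2 ^ t" using less_exp[of t] by (metis of_nat_le_iff of_nat_numeral of_nat_power less_imp_le)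
  then have "real t ^ 2 \<le> (2 ^ t) ^ 2" by (intro power_mono) auto
  also have "\<dots> = (2 ^ 2) ^ t" by (metis power_mult mult.commute)
  also have "\<dots> = 4 ^ t" by simp
  finally show ?thesis .
qed

text \<open>The terms of the first-moment bound, estimated by \<open>n choose t \<le> n ^ t / t!\<close> and
  \<open>x ^ t / t! \<le> exp x\<close>.\<close>
lemma expansion_term_le:
  fixes \<rho> K :: real
  assumes N0: "N > 0" and MN: "real M \<le> \<rho> * real N" and r0: "\<rho> \<ge> 0" and K0: "K \<ge> 0"
  shows "real (N choose t) * real (M choose Suc t) * K ^ Suc t * (real t / real N) ^ (3 * Suc t)
          \<le> (exp 2 * \<rho> * K) ^ Suc t * (real t / real N) ^ Suc (Suc t)"
proof -
  define x where "x = real t"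
  define n where "n = real N"
  have n0: "n > 0" using N0 n_def by simp
  have x0: "x \<ge> 0" using x_def by simp
  have a: "real (N choose t) \<le> n ^ t / fact t" unfolding n_def by (rule binomial_le_power_div_fact)
  have b: "real (M choose Suc t) \<le> (\<rho> * n) ^ Suc t / fact (Suc t)"
  proof -
    have "real (M choose Suc t) \<le> real M ^ Suc t / fact (Suc t)" by (rule binomial_le_power_div_fact)
    also have "\<dots> \<le> (\<rho> * n) ^ Suc t / fact (Suc t)"
      using MN n_def by (intro divide_right_mono power_mono) auto
    finally show ?thesis .
  qed
  have e1: "x ^ t / fact t \<le> exp x" using power_div_fact_le_exp[OF x0] .
  have e2: "x ^ Suc t / fact (Suc t) \<le> exp (x + 1)"
  proof -
    have "x ^ Suc t \<le> (x + 1) ^ Suc t" using x0 by (intro power_mono) auto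
    then have "x ^ Suc t / fact (Suc t) \<le> (x + 1) ^ Suc t / fact (Suc t)" by (intro divide_right_mono) auto
    also have "\<dots> \<le> exp (x + 1)" by (rule power_div_fact_le_exp) (use x0 in simp)
    finally show ?thesis .
  qed
  have "real (N choose t) * real (M choose Suc t) * K ^ Suc t * (x / n) ^ (3 * Suc t)
        \<le> (n ^ t / fact t) * ((\<rho> * n) ^ Suc t / fact (Suc t)) * K ^ Suc t * (x / n) ^ (3 * Suc t)"
    using a b K0 x0 n0 by (intro mult_right_mono mult_mono) auto
  also have "\<dots> = (\<rho> * K) ^ Suc t * (x ^ t / fact t) * (x ^ Suc t / fact (Suc t)) * (x / n) ^ Suc (Suc t)"
  proof -
    have e3: "3 * Suc t = t + Suc t + Suc (Suc t)" by simp
    have ex: "x ^ (3 * Suc t) = x ^ t * x ^ Suc t * x ^ Suc (Suc t)" by (simp only: e3 power_add)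
    have en: "n ^ (3 * Suc t) = n ^ t * n ^ Suc t * n ^ Suc (Suc t)" by (simp only: e3 power_add)
    show ?thesis using n0 unfolding power_divide ex en by (simp add: field_simps power_mult_distrib)
  qed
  also have "\<dots> \<le> (\<rho> * K) ^ Suc t * exp x * exp (x + 1) * (x / n) ^ Suc (Suc t)"
    using e1 e2 r0 K0 x0 n0 by (intro mult_right_mono mult_mono) auto
  also have "\<dots> \<le> (exp 2 * \<rho> * K) ^ Suc t * (x / n) ^ Suc (Suc t)"
  proof -
    have "exp x * exp (x + 1) \<le> exp 2 ^ Suc t"
      using x_def by (simp add: exp_add[symmetric] exp_of_nat_mult[symmetric] algebra_simps)
    then have "(\<rho> * K) ^ Suc t * (exp x * exp (x + 1)) \<le> (\<rho> * K) ^ Suc t * exp 2 ^ Suc t"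
      using r0 K0 by (intro mult_left_mono) auto
    then show ?thesis using x0 n0
      by (intro mult_right_mono) (auto simp: power_mult_distrib ac_simps)
  qed
  finally show ?thesis unfolding x_def n_def .
qed

lemma expansion_term_le_geometric:
  fixes c \<delta> :: real
  assumes t1: "t \<ge> 1" and tN: "real t \<le> \<delta> * real N" and N0: "N > 0"
    and cd: "c * \<delta> \<le> 1/8" and c1: "c \<ge> 1"
  shows "c ^ Suc t * (real t / real N) ^ Suc (Suc t) \<le> 8 * c ^ 2 / real N ^ 2 * (1/2) ^ t"
proof -
  define x where "x = real t"
  define n where "n = real N"
  have n0: "n > 0" using N0 n_def by simp
  have x0: "x \<ge> 0" using x_def by simp
  have cxn: "c * x / n \<le> 1/8"
  proof -
    have "c * x \<le> c * (\<delta> * n)" using tN x_def n_def c1 by (intro mult_left_mono) auto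
    also have "\<dots> \<le> (1/8) * n" using cd n0 by (simp add: mult.assoc[symmetric])
    finally show ?thesis using n0 by (simp add: field_simps)
  qed
  have "c ^ Suc t * (x / n) ^ Suc (Suc t) = (c * x / n) ^ Suc t * (x / n)"
    by (simp add: power_mult_distrib power_divide ac_simps)
  also have "\<dots> \<le> (c * x / n) ^ Suc t * 1"
  proof -
    have "x / n \<le> c * x / n" using mult_right_mono[OF c1, of "x / n"] x0 n0 by simp
    then have "x / n \<le> 1" using cxn by linarith
    then show ?thesis using c1 x0 n0 by (intro mult_left_mono) auto
  qed
  also have "\<dots> = (c * x / n) ^ 2 * (c * x / n) ^ (t - 1)"
    using t1 by (simp flip: power_add)
  also have "\<dots> \<le> (c * x / n) ^ 2 * (1/8) ^ (t - 1)"
    using cxn c1 x0 n0 by (intro mult_left_mono power_mono) auto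
  also have "\<dots> = 8 * c ^ 2 / n ^ 2 * (x ^ 2 * (1/8) ^ t)"
    using t1 n0 by (cases t) (auto simp: field_simps power_mult_distrib power_divide)
  also have "\<dots> \<le> 8 * c ^ 2 / n ^ 2 * (1/2) ^ t"
  proof -
    have "x ^ 2 * (1/8) ^ t \<le> 4 ^ t * (1/8) ^ t"
      using square_le_four_power[of t] x_def by (intro mult_right_mono) auto
    also have "\<dots> = (1/2) ^ t" by (simp add: power_mult_distrib[symmetric])
    finally show ?thesis using n0 by (intro mult_left_mono) auto
  qed
  finally show ?thesis unfolding x_def n_def .
qed

lemma sum_half_powers_le: "(\<Sum>t\<in>{1..n}. (1/2::real) ^ t) \<le> 1"
proof -
  have "(\<Sum>t\<in>{1..n}. (1/2::real) ^ t) = 1 - (1/2) ^ n"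
    by (induction n) (auto simp: atLeastAtMostSuc_conv)
  then show ?thesis by simp
qed

lemma card_non_expanding_bound:
  fixes \<rho> \<delta> c :: real
  assumes "N > 0" "real M \<le> \<rho> * real N" "\<rho> \<ge> 0" "\<delta> \<ge> 0"
    and c: "c = exp 2 * \<rho> * real (k choose 3)" "c * \<delta> \<le> 1/8" "c \<ge> 1"
  shows "real (card (formulas k N M - {\<Phi>. expanding k N M \<delta> \<Phi>}))
    \<le> real (card (formulas k N M)) * (8 * c ^ 2 / real N ^ 2)"
proof -
  define cF where "cF = real (card (formulas k N M))"
  have "real (card (formulas k N M - {\<Phi>. expanding k N M \<delta> \<Phi>})) \<le> cF *
     (\<Sum>t\<in>{1..nat \<lfloor>\<delta> * real N\<rfloor>}. real (N choose t) * real (M choose Suc t) * real (k choose 3) ^ Suc t *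
        (real t / real N) ^ (3 * Suc t))"
    unfolding cF_def by (rule card_non_expanding_le[OF assms(1)])
  also have "\<dots> \<le> cF * (\<Sum>t\<in>{1..nat \<lfloor>\<delta> * real N\<rfloor>}. 8 * c ^ 2 / real N ^ 2 * (1/2) ^ t)"
  proof (intro mult_left_mono sum_mono)
    fix t assume t: "t \<in> {1..nat \<lfloor>\<delta> * real N\<rfloor>}"
    have "real t \<le> real (nat \<lfloor>\<delta> * real N\<rfloor>)" using t by simp
    also have "\<dots> \<le> \<delta> * real N" using assms(4) by (intro of_nat_floor) simp
    finally have "real t \<le> \<delta> * real N" .
    then show "real (N choose t) * real (M choose Suc t) * real (k choose 3) ^ Suc t *
        (real t / real N) ^ (3 * Suc t) \<le> 8 * c ^ 2 / real N ^ 2 * (1/2) ^ t"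
      using expansion_term_le[OF assms(1-3), of "real (k choose 3)" t]
        expansion_term_le_geometric[of t \<delta> N c] t assms(1) c by force
  qed (simp add: cF_def)
  also have "\<dots> = cF * (8 * c ^ 2 / real N ^ 2) * (\<Sum>t\<in>{1..nat \<lfloor>\<delta> * real N\<rfloor>}. (1/2::real) ^ t)"
    by (simp add: sum_distrib_left mult.assoc)
  also have "\<dots> \<le> cF * (8 * c ^ 2 / real N ^ 2)"
    using sum_half_powers_le by (intro mult_left_le) (auto simp: cF_def)
  finally show ?thesis unfolding cF_def .
qed

section \<open>Concentration of literal degrees\<close>

definition lit_count :: "nat \<Rightarrow> nat \<Rightarrow> lit set \<Rightarrow> cnf \<Rightarrow> nat" where
  "lit_count k M S \<Phi> = card {p\<in>positions k M. \<Phi> p \<in> S}"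

lemma sum_exp_lit_count:
  assumes "S \<subseteq> lits N"
  shows "(\<Sum>\<Phi>\<in>formulas k N M. exp (u * real (lit_count k M S \<Phi>))) =
         (real (2 * N) - real (card S) + real (card S) * exp u) ^ (M * k)"
proof -
  define h where "h l = (if l \<in> S then exp u else 1)" for l
  have e: "exp (u * real (lit_count k M S \<Phi>)) = (\<Prod>p\<in>positions k M. h (\<Phi> p))" for \<Phi>
  proof -
    have "(\<Prod>p\<in>positions k M. h (\<Phi> p)) = (\<Prod>p\<in>{p\<in>positions k M. \<Phi> p \<in> S}. exp u)"
      unfolding h_def by (rule prod.inter_filter[OF finite_positions, symmetric])
    also have "\<dots> = exp u ^ lit_count k M S \<Phi>" unfolding lit_count_def by simp
    also have "\<dots> = exp (u * real (lit_count k M S \<Phi>))" by (simp add: exp_of_nat_mult[symmetric] mult.commute)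
    finally show ?thesis by simp
  qed
  have "(\<Sum>\<Phi>\<in>formulas k N M. exp (u * real (lit_count k M S \<Phi>))) = (\<Sum>\<Phi>\<in>PiE (positions k M) (\<lambda>_. lits N). \<Prod>p\<in>positions k M. h (\<Phi> p))"
    unfolding formulas_eq_PiE e ..
  also have "\<dots> = (\<Prod>p\<in>positions k M. \<Sum>l\<in>lits N. h l)"
    by (rule prod_sum_PiE[symmetric]) (auto simp: finite_positions finite_lits)
  also have "\<dots> = (\<Sum>l\<in>lits N. h l) ^ (M * k)" by (simp add: card_positions)
  also have "(\<Sum>l\<in>lits N. h l) = real (card S) * exp u + real (card (lits N - S))"
    unfolding h_def using assms by (simp add: sum.If_cases finite_lits Int_absorb1 Diff_eq)
  also have "real (card (lits N - S)) = real (2 * N) - real (card S)"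
  proof -
    have "card S \<le> 2 * N" using card_mono[OF finite_lits assms] card_lits by metis
    moreover have "card (lits N - S) = 2 * N - card S"
      using assms by (simp add: card_Diff_subset finite_lits card_lits finite_subset)
    ultimately show ?thesis by (simp add: of_nat_diff)
  qed
  finally show ?thesis by (simp add: algebra_simps)
qed

lemma card_lit_count_ge_mult_exp_le:
  assumes "u \<ge> 0"
  shows "real (card {\<Phi>\<in>formulas k N M. a \<le> real (lit_count k M S \<Phi>)}) * exp (u * a) \<le>
         (\<Sum>\<Phi>\<in>formulas k N M. exp (u * real (lit_count k M S \<Phi>)))"
proof -
  let ?E = "{\<Phi>\<in>formulas k N M. a \<le> real (lit_count k M S \<Phi>)}"
  have "real (card ?E) * exp (u * a) = (\<Sum>\<Phi>\<in>?E. exp (u * a))" by simp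
  also have "\<dots> \<le> (\<Sum>\<Phi>\<in>?E. exp (u * real (lit_count k M S \<Phi>)))"
    using assms by (intro sum_mono) (auto intro: mult_left_mono)
  also have "\<dots> \<le> (\<Sum>\<Phi>\<in>formulas k N M. exp (u * real (lit_count k M S \<Phi>)))"
    by (intro sum_mono2 finite_formulas) auto
  finally show ?thesis .
qed

lemma card_lit_count_le_mult_exp_le:
  assumes "u \<le> 0"
  shows "real (card {\<Phi>\<in>formulas k N M. real (lit_count k M S \<Phi>) \<le> a}) * exp (u * a) \<le>
         (\<Sum>\<Phi>\<in>formulas k N M. exp (u * real (lit_count k M S \<Phi>)))"
proof -
  let ?E = "{\<Phi>\<in>formulas k N M. real (lit_count k M S \<Phi>) \<le> a}"
  have "real (card ?E) * exp (u * a) = (\<Sum>\<Phi>\<in>?E. exp (u * a))" by simp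
  also have "\<dots> \<le> (\<Sum>\<Phi>\<in>?E. exp (u * real (lit_count k M S \<Phi>)))"
    using assms by (intro sum_mono) (auto intro: mult_left_mono_neg)
  also have "\<dots> \<le> (\<Sum>\<Phi>\<in>formulas k N M. exp (u * real (lit_count k M S \<Phi>)))"
    by (intro sum_mono2 finite_formulas) auto
  finally show ?thesis .
qed

lemma mean_exp_lit_count_le:
  assumes "S \<subseteq> lits N" "N > 0"
  shows "(\<Sum>\<Phi>\<in>formulas k N M. exp (u * real (lit_count k M S \<Phi>))) / real (card (formulas k N M))
     \<le> exp (real (M * k) * (real (card S) / (2 * real N)) * (exp u - 1))"
proof -
  define q where "q = real (card S) / (2 * real N)"
  have cS: "card S \<le> 2 * N" using card_mono[OF finite_lits assms(1)] card_lits by metis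
  have q0: "q \<ge> 0" and q1: "q \<le> 1" using cS assms(2) unfolding q_def by (auto simp: field_simps)
  have base: "(real (2 * N) - real (card S) + real (card S) * exp u) = (2 * real N) * (1 + q * (exp u - 1))"
    unfolding q_def using assms(2) by (simp add: field_simps)
  have b0: "1 + q * (exp u - 1) \<ge> 0"
  proof -
    have "q * (exp u - 1) \<ge> q * (-1)" using q0 by (intro mult_left_mono) auto
    then show ?thesis using q1 by linarith
  qed
  have "(\<Sum>\<Phi>\<in>formulas k N M. exp (u * real (lit_count k M S \<Phi>))) / real (card (formulas k N M))
      = (1 + q * (exp u - 1)) ^ (M * k)"
    unfolding sum_exp_lit_count[OF assms(1)] base card_formulas using assms(2) by (simp add: power_mult_distrib)
  also have "\<dots> \<le> exp (q * (exp u - 1)) ^ (M * k)"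
    by (rule power_mono[OF _ b0]) (use exp_ge_add_one_self[of "q * (exp u - 1)"] in simp)
  also have "\<dots> = exp (real (M * k) * (q * (exp u - 1)))" by (simp add: exp_of_nat_mult[symmetric])
  finally show ?thesis unfolding q_def by (simp add: ac_simps)
qed

lemma chernoff_lit_count_upper:
  assumes "S \<subseteq> lits N" "N > 0" "0 < \<beta>" "\<beta> \<le> 1" "a \<ge> 0"
  shows "real (card {\<Phi>\<in>formulas k N M. a \<le> real (lit_count k M S \<Phi>)}) / real (card (formulas k N M))
     \<le> exp (real (M * k) * (real (card S) / (2 * real N)) * \<beta> - a * (\<beta> - \<beta>^2))"
proof -
  define u where "u = ln (1 + \<beta>)"
  define \<mu> where "\<mu> = real (M * k) * (real (card S) / (2 * real N))"
  have u0: "u \<ge> 0" unfolding u_def using assms(3) by simp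
  have eu: "exp u - 1 = \<beta>" unfolding u_def using assms(3) by simp
  have ul: "\<beta> - \<beta>^2 \<le> u" unfolding u_def using ln_one_plus_pos_lower_bound[of \<beta>] assms(3,4) by simp
  define Z where "Z = (\<Sum>\<Phi>\<in>formulas k N M. exp (u * real (lit_count k M S \<Phi>)))"
  define cF where "cF = real (card (formulas k N M))"
  have cF0: "cF > 0" unfolding cF_def card_formulas using assms(2) by simp
  have "Z / cF \<le> exp (\<mu> * \<beta>)" using mean_exp_lit_count_le[OF assms(1,2), where u=u and k=k and M=M] unfolding Z_def cF_def \<mu>_def eu .
  then have Z: "Z \<le> cF * exp (\<mu> * \<beta>)" using cF0 by (simp add: field_simps)
  have "real (card {\<Phi>\<in>formulas k N M. a \<le> real (lit_count k M S \<Phi>)}) * exp (u * a) \<le> Z"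
    unfolding Z_def by (rule card_lit_count_ge_mult_exp_le[OF u0])
  then have "real (card {\<Phi>\<in>formulas k N M. a \<le> real (lit_count k M S \<Phi>)}) \<le> cF * exp (\<mu> * \<beta>) / exp (u * a)"
    using Z by (simp add: field_simps)
  also have "\<dots> = cF * exp (\<mu> * \<beta> - u * a)" by (simp add: exp_diff)
  also have "\<dots> \<le> cF * exp (\<mu> * \<beta> - a * (\<beta> - \<beta>^2))"
  proof -
    have "(\<beta> - \<beta>^2) * a \<le> u * a" using ul assms(5) by (intro mult_right_mono) auto
    then show ?thesis using cF0 by (intro mult_left_mono) (auto simp: mult.commute)
  qed
  finally show ?thesis using cF0 unfolding cF_def \<mu>_def by (simp add: field_simps)
qed

lemma chernoff_lit_count_lower:
  assumes "S \<subseteq> lits N" "N > 0" "0 < \<beta>" "\<beta> \<le> 1/2" "a \<ge> 0"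
  shows "real (card {\<Phi>\<in>formulas k N M. real (lit_count k M S \<Phi>) \<le> a}) / real (card (formulas k N M))
     \<le> exp (- (real (M * k) * (real (card S) / (2 * real N)) * \<beta>) + a * (\<beta> + 2 * \<beta>^2))"
proof -
  define u where "u = ln (1 - \<beta>)"
  define \<mu> where "\<mu> = real (M * k) * (real (card S) / (2 * real N))"
  have u0: "u \<le> 0" unfolding u_def using assms(3,4) by simp
  have eu: "exp u - 1 = - \<beta>" unfolding u_def using assms(3,4) by simp
  have ul: "- \<beta> - 2 * \<beta>^2 \<le> u" unfolding u_def using ln_one_minus_pos_lower_bound[of \<beta>] assms(3,4) by simp
  define Z where "Z = (\<Sum>\<Phi>\<in>formulas k N M. exp (u * real (lit_count k M S \<Phi>)))"
  define cF where "cF = real (card (formulas k N M))"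
  have cF0: "cF > 0" unfolding cF_def card_formulas using assms(2) by simp
  have "Z / cF \<le> exp (\<mu> * (- \<beta>))" using mean_exp_lit_count_le[OF assms(1,2), where u=u and k=k and M=M] unfolding Z_def cF_def \<mu>_def eu .
  then have Z: "Z \<le> cF * exp (- (\<mu> * \<beta>))" using cF0 by (simp add: field_simps)
  have "real (card {\<Phi>\<in>formulas k N M. real (lit_count k M S \<Phi>) \<le> a}) * exp (u * a) \<le> Z"
    unfolding Z_def by (rule card_lit_count_le_mult_exp_le[OF u0])
  then have "real (card {\<Phi>\<in>formulas k N M. real (lit_count k M S \<Phi>) \<le> a}) \<le> cF * exp (- (\<mu> * \<beta>)) / exp (u * a)"
    using Z by (simp add: field_simps)
  also have "\<dots> = cF * exp (- (\<mu> * \<beta>) - u * a)" by (simp add: exp_diff)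
  also have "\<dots> \<le> cF * exp (- (\<mu> * \<beta>) + a * (\<beta> + 2 * \<beta>^2))"
  proof -
    have "- u * a \<le> (\<beta> + 2 * \<beta>^2) * a" using ul assms(5) by (intro mult_right_mono) auto
    then show ?thesis using cF0 by (intro mult_left_mono) (auto simp: mult.commute)
  qed
  finally show ?thesis using cF0 unfolding cF_def \<mu>_def by (simp add: field_simps)
qed

lemma lit_count_eq_sum_degree:
  assumes "finite S"
  shows "real (lit_count k M S \<Phi>) = (\<Sum>l\<in>S. real (degree k \<Phi> {..<M} l))"
proof -
  have d: "degree k \<Phi> {..<M} l = card {p\<in>positions k M. \<Phi> p = l}" for l
    unfolding degree_def positions_def by (rule arg_cong[where f=card]) auto
  have "{p\<in>positions k M. \<Phi> p \<in> S} = (\<Union>l\<in>S. {p\<in>positions k M. \<Phi> p = l})" by auto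
  then have "lit_count k M S \<Phi> = card (\<Union>l\<in>S. {p\<in>positions k M. \<Phi> p = l})" unfolding lit_count_def by simp
  also have "\<dots> = (\<Sum>l\<in>S. card {p\<in>positions k M. \<Phi> p = l})"
    by (rule card_UN_disjoint) (auto simp: assms finite_positions)
  finally show ?thesis by (simp add: d)
qed

definition lit_count_far :: "nat \<Rightarrow> nat \<Rightarrow> nat \<Rightarrow> real \<Rightarrow> nat \<Rightarrow> lit set \<Rightarrow> cnf set" where
  "lit_count_far k N M r s S = {\<Phi>\<in>formulas k N M. real s * (real k * r / 2 + dev_threshold k / 2) \<le> real (lit_count k M S \<Phi>)} \<union>
                      {\<Phi>\<in>formulas k N M. real (lit_count k M S \<Phi>) \<le> real s * (real k * r / 2 - dev_threshold k / 2)}"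

lemma card_half_deviating_le:
  "card (half_deviating k r N M \<Phi>) \<le>
     card {l\<in>lits N. real (degree k \<Phi> {..<M} l) > real k * r / 2 + dev_threshold k / 2} +
     card {l\<in>lits N. real (degree k \<Phi> {..<M} l) < real k * r / 2 - dev_threshold k / 2}"
proof -
  define m where "m = real k * r / 2"
  define d where "d l = real (degree k \<Phi> {..<M} l)" for l
  define Lup where "Lup = {l\<in>lits N. d l > m + dev_threshold k / 2}"
  define Ldn where "Ldn = {l\<in>lits N. d l < m - dev_threshold k / 2}"
  have fL: "finite Lup" "finite Ldn" unfolding Lup_def Ldn_def using finite_lits by auto
  have "half_deviating k r N M \<Phi> \<subseteq> fst ` Lup \<union> fst ` Ldn"
  proof
    fix x assume x: "x \<in> half_deviating k r N M \<Phi>"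
    then have xN: "x < N" unfolding half_deviating_def by auto
    have "max \<bar>d (x, True) - m\<bar> \<bar>d (x, False) - m\<bar> > dev_threshold k / 2"
      using x unfolding half_deviating_def d_def m_def by auto
    then obtain b where b: "\<bar>d (x, b) - m\<bar> > dev_threshold k / 2" by (metis max_def)
    have "(x, b) \<in> lits N" using xN unfolding lits_def by auto
    moreover have "d (x, b) > m + dev_threshold k / 2 \<or> d (x, b) < m - dev_threshold k / 2"
      using b by (auto simp: abs_if split: if_splits)
    ultimately have "(x, b) \<in> Lup \<or> (x, b) \<in> Ldn" unfolding Lup_def Ldn_def by auto
    then show "x \<in> fst ` Lup \<union> fst ` Ldn" by (metis UnI1 UnI2 fst_conv image_eqI)
  qed
  then have "card (half_deviating k r N M \<Phi>) \<le> card (fst ` Lup \<union> fst ` Ldn)"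
    using fL by (intro card_mono) auto
  also have "\<dots> \<le> card (fst ` Lup) + card (fst ` Ldn)" by (rule card_Un_le)
  also have "\<dots> \<le> card Lup + card Ldn" using card_image_le fL by (metis add_mono)
  finally show ?thesis unfolding Lup_def Ldn_def d_def m_def .
qed

text \<open>If more than \<open>\<delta> N / 2\<close> variables are half-deviating, then some set of
  \<open>s \<ge> \<delta> N / 4\<close> literals all deviates in the same direction.\<close>
lemma many_half_deviating_subset:
  assumes "s = nat \<lceil>\<delta> * real N / 4\<rceil>"
  shows "{\<Phi>\<in>formulas k N M. 2 * real (card (half_deviating k r N M \<Phi>)) > \<delta> * real N} \<subseteq>
         (\<Union>S\<in>{S. S \<subseteq> lits N \<and> card S = s}. lit_count_far k N M r s S)"
proof
  fix \<Phi> assume \<Phi>: "\<Phi> \<in> {\<Phi>\<in>formulas k N M. 2 * real (card (half_deviating k r N M \<Phi>)) > \<delta> * real N}"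
  define m where "m = real k * r / 2"
  define d where "d l = real (degree k \<Phi> {..<M} l)" for l
  define Lup where "Lup = {l\<in>lits N. d l > m + dev_threshold k / 2}"
  define Ldn where "Ldn = {l\<in>lits N. d l < m - dev_threshold k / 2}"
  have fL: "finite Lup" "finite Ldn" unfolding Lup_def Ldn_def using finite_lits by auto
  have "real (card (half_deviating k r N M \<Phi>)) \<le> real (card Lup) + real (card Ldn)"
    using card_half_deviating_le[of k r N M \<Phi>] unfolding Lup_def Ldn_def d_def m_def
    by (simp only: of_nat_add[symmetric] of_nat_le_iff)
  then have "\<delta> * real N < 2 * (real (card Lup) + real (card Ldn))" using \<Phi> by auto
  then consider "real (card Lup) > \<delta> * real N / 4" | "real (card Ldn) > \<delta> * real N / 4" by argo
  moreover have sle: "real (card L) > \<delta> * real N / 4 \<Longrightarrow> s \<le> card L" for L :: "lit set"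
    using assms by (simp add: nat_le_iff ceiling_le_iff)
  ultimately show "\<Phi> \<in> (\<Union>S\<in>{S. S \<subseteq> lits N \<and> card S = s}. lit_count_far k N M r s S)"
  proof cases
    case 1
    obtain S where S: "S \<subseteq> Lup" "card S = s" using obtain_subset_with_card_n[OF sle[OF 1]] by blast
    have fS: "finite S" using S(1) fL(1) finite_subset by auto
    have "real s * (m + dev_threshold k / 2) = (\<Sum>l\<in>S. m + dev_threshold k / 2)" using S(2) by simp
    also have "\<dots> \<le> (\<Sum>l\<in>S. d l)" using S(1) unfolding Lup_def by (intro sum_mono) auto
    also have "\<dots> = real (lit_count k M S \<Phi>)" unfolding d_def by (rule lit_count_eq_sum_degree[OF fS, symmetric])
    finally have "\<Phi> \<in> lit_count_far k N M r s S" using \<Phi> unfolding lit_count_far_def m_def by auto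
    moreover have "S \<in> {S. S \<subseteq> lits N \<and> card S = s}" using S unfolding Lup_def by auto
    ultimately show ?thesis by blast
  next
    case 2
    obtain S where S: "S \<subseteq> Ldn" "card S = s" using obtain_subset_with_card_n[OF sle[OF 2]] by blast
    have fS: "finite S" using S(1) fL(2) finite_subset by auto
    have "real (lit_count k M S \<Phi>) = (\<Sum>l\<in>S. d l)" unfolding d_def by (rule lit_count_eq_sum_degree[OF fS])
    also have "\<dots> \<le> (\<Sum>l\<in>S. m - dev_threshold k / 2)" using S(1) unfolding Ldn_def by (intro sum_mono) auto
    also have "\<dots> = real s * (m - dev_threshold k / 2)" using S(2) by simp
    finally have "\<Phi> \<in> lit_count_far k N M r s S" using \<Phi> unfolding lit_count_far_def m_def by auto
    moreover have "S \<in> {S. S \<subseteq> lits N \<and> card S = s}" using S unfolding Ldn_def by auto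
    ultimately show ?thesis by blast
  qed
qed

lemma card_lit_count_far_le:
  assumes "S \<subseteq> lits N" "card S = s" "N > 0"
    and "0 < \<beta>1" "\<beta>1 \<le> 1" "0 < \<beta>2" "\<beta>2 \<le> 1/2"
    and "real s * (real k * r / 2 + dev_threshold k / 2) \<ge> 0" "real s * (real k * r / 2 - dev_threshold k / 2) \<ge> 0"
  shows "real (card (lit_count_far k N M r s S)) \<le> real (card (formulas k N M)) *
       (exp (real (M * k) * (real s / (2 * real N)) * \<beta>1 - real s * (real k * r / 2 + dev_threshold k / 2) * (\<beta>1 - \<beta>1^2))
      + exp (- (real (M * k) * (real s / (2 * real N)) * \<beta>2) + real s * (real k * r / 2 - dev_threshold k / 2) * (\<beta>2 + 2 * \<beta>2^2)))"
proof -
  define cF where "cF = real (card (formulas k N M))"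
  define A1 where "A1 = {\<Phi>\<in>formulas k N M. real s * (real k * r / 2 + dev_threshold k / 2) \<le> real (lit_count k M S \<Phi>)}"
  define A2 where "A2 = {\<Phi>\<in>formulas k N M. real (lit_count k M S \<Phi>) \<le> real s * (real k * r / 2 - dev_threshold k / 2)}"
  have cF0: "cF > 0" unfolding cF_def card_formulas using assms(3) by simp
  have "real (card A1) / cF \<le> exp (real (M * k) * (real s / (2 * real N)) * \<beta>1 - real s * (real k * r / 2 + dev_threshold k / 2) * (\<beta>1 - \<beta>1^2))"
    using chernoff_lit_count_upper[OF assms(1,3,4,5,8), of k M] assms(2) unfolding cF_def A1_def by simp
  moreover have "real (card A2) / cF \<le> exp (- (real (M * k) * (real s / (2 * real N)) * \<beta>2) + real s * (real k * r / 2 - dev_threshold k / 2) * (\<beta>2 + 2 * \<beta>2^2))"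
    using chernoff_lit_count_lower[OF assms(1,3,6,7,9), of k M] assms(2) unfolding cF_def A2_def by simp
  ultimately have "real (card A1) + real (card A2) \<le> cF *
       (exp (real (M * k) * (real s / (2 * real N)) * \<beta>1 - real s * (real k * r / 2 + dev_threshold k / 2) * (\<beta>1 - \<beta>1^2))
      + exp (- (real (M * k) * (real s / (2 * real N)) * \<beta>2) + real s * (real k * r / 2 - dev_threshold k / 2) * (\<beta>2 + 2 * \<beta>2^2)))"
    using cF0 by (simp add: divide_le_eq distrib_left mult.commute)
  moreover have "card (lit_count_far k N M r s S) \<le> card A1 + card A2"
    unfolding lit_count_far_def A1_def A2_def by (rule card_Un_le)
  ultimately show ?thesis unfolding cF_def by linarith
qed

lemma card_many_half_deviating_le:
  assumes N0: "N > 0" and sdef: "s = nat \<lceil>\<delta> * real N / 4\<rceil>"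
    and b1: "0 < \<beta>1" "\<beta>1 \<le> 1" and b2: "0 < \<beta>2" "\<beta>2 \<le> 1/2"
    and a1: "real s * (real k * r / 2 + dev_threshold k / 2) \<ge> 0" and a2: "real s * (real k * r / 2 - dev_threshold k / 2) \<ge> 0"
  shows "real (card {\<Phi>\<in>formulas k N M. 2 * real (card (half_deviating k r N M \<Phi>)) > \<delta> * real N})
    \<le> real (card (formulas k N M)) * real ((2 * N) choose s) *
       (exp (real (M * k) * (real s / (2 * real N)) * \<beta>1 - real s * (real k * r / 2 + dev_threshold k / 2) * (\<beta>1 - \<beta>1^2))
      + exp (- (real (M * k) * (real s / (2 * real N)) * \<beta>2) + real s * (real k * r / 2 - dev_threshold k / 2) * (\<beta>2 + 2 * \<beta>2^2)))"
    (is "_ \<le> ?cF * _ * ?E")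
proof -
  define Ss where "Ss = {S. S \<subseteq> lits N \<and> card S = s}"
  have fSs: "finite Ss" unfolding Ss_def by (rule finite_subset[of _ "Pow (lits N)"]) (auto simp: finite_lits)
  have cSs: "card Ss = (2 * N) choose s" unfolding Ss_def using n_subsets[OF finite_lits, of N s] card_lits by simp
  have "real (card {\<Phi>\<in>formulas k N M. 2 * real (card (half_deviating k r N M \<Phi>)) > \<delta> * real N})
        \<le> real (card (\<Union>S\<in>Ss. lit_count_far k N M r s S))"
    using many_half_deviating_subset[OF sdef, of k M r] unfolding Ss_def
    by (intro of_nat_mono card_mono) (auto simp: lit_count_far_def finite_formulas intro: finite_subset[OF _ finite_formulas])
  also have "\<dots> \<le> (\<Sum>S\<in>Ss. real (card (lit_count_far k N M r s S)))" by (rule real_card_UN_le[OF fSs])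
  also have "\<dots> \<le> (\<Sum>S\<in>Ss. ?cF * ?E)"
    using card_lit_count_far_le[OF _ _ N0 b1 b2 a1 a2] unfolding Ss_def by (intro sum_mono) auto
  also have "\<dots> = ?cF * real ((2 * N) choose s) * ?E" using cSs by simp
  finally show ?thesis .
qed

lemma chernoff_exponent_upper:
  fixes K r t n M s :: real
  assumes n1: "n \<ge> 1" and K1: "K \<ge> 1" and r0: "r > 0" and t2: "2 * K \<le> t" and tr: "t \<le> K * r"
    and Mu: "M \<le> r * n + 1" and s0: "s \<ge> 0"
  defines "A \<equiv> K * r / 2 + t / 2"
  defines "\<beta> \<equiv> (t - K) / (4 * A)"
  shows "M * K * (s / (2 * n)) * \<beta> - s * A * (\<beta> - \<beta>^2) \<le> - (s * t^2 / (64 * K * r))"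
    and "0 < \<beta>" "\<beta> \<le> 1"
proof -
  have A0: "A > 0" unfolding A_def using K1 r0 t2 by (simp add: add_pos_pos)
  have AKr: "A \<le> K * r" unfolding A_def using tr by simp
  have tk: "t - K \<ge> t / 2" using t2 by simp
  have tK0: "t - K > 0" using t2 K1 by simp
  show b0: "0 < \<beta>" unfolding \<beta>_def using A0 tK0 by simp
  show "\<beta> \<le> 1" unfolding \<beta>_def using A0 tK0 unfolding A_def using K1 r0 t2 tr by (simp add: field_simps)
  have \<mu>: "M * K * (s / (2 * n)) \<le> s * (K * r / 2 + K / 2)"
  proof -
    have "M * K * (s / (2 * n)) = (M * K * s) / (2 * n)" by simp
    also have "\<dots> \<le> ((r * n + 1) * K * s) / (2 * n)"
      using Mu K1 s0 n1 by (intro divide_right_mono mult_right_mono) auto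
    also have "\<dots> = s * (K * r / 2) + s * K / (2 * n)" using n1 by (simp add: field_simps)
    also have "\<dots> \<le> s * (K * r / 2) + s * K / 2"
    proof -
      have "s * K / (2 * n) \<le> s * K / 2" using n1 s0 K1 by (intro divide_left_mono) auto
      then show ?thesis by simp
    qed
    finally show ?thesis by (simp add: algebra_simps)
  qed
  have "M * K * (s / (2 * n)) * \<beta> - s * A * (\<beta> - \<beta>^2) \<le> s * (K * r / 2 + K / 2) * \<beta> - s * A * (\<beta> - \<beta>^2)"
    using \<mu> b0 by (intro diff_right_mono mult_right_mono) auto
  also have "\<dots> = s * (- (t - K) / 2 * \<beta> + A * \<beta>^2)" unfolding A_def by (simp add: field_simps power2_eq_square)
  also have "\<dots> = s * (- ((t - K)^2) / (16 * A))"
    unfolding \<beta>_def using A0 by (simp add: field_simps power2_eq_square)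
  also have "\<dots> \<le> s * (- (t^2 / (64 * K * r)))"
  proof -
    have "t^2 / (64 * K * r) = (t / 2)^2 / (16 * (K * r))" by (simp add: power2_eq_square field_simps)
    also have "\<dots> \<le> (t - K)^2 / (16 * (K * r))"
      using tk t2 K1 r0 by (intro divide_right_mono power_mono) auto
    also have "\<dots> \<le> (t - K)^2 / (16 * A)"
      using AKr A0 by (intro divide_left_mono) auto
    finally show ?thesis using s0 by (intro mult_left_mono) auto
  qed
  finally show "M * K * (s / (2 * n)) * \<beta> - s * A * (\<beta> - \<beta>^2) \<le> - (s * t^2 / (64 * K * r))" by simp
qed

lemma chernoff_exponent_lower:
  fixes K r t n M s :: real
  assumes n1: "n \<ge> 1" and K1: "K \<ge> 1" and r0: "r > 0" and t0: "t > 0" and tr: "t \<le> K * r"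
    and Ml: "r * n \<le> M" and s0: "s \<ge> 0"
  defines "m \<equiv> K * r / 2"
  defines "\<beta> \<equiv> t / (8 * m)"
  shows "- (M * K * (s / (2 * n)) * \<beta>) + s * (m - t / 2) * (\<beta> + 2 * \<beta>^2) \<le> - (s * t^2 / (64 * K * r))"
    and "0 < \<beta>" "\<beta> \<le> 1/2"
proof -
  have m0: "m > 0" unfolding m_def using K1 r0 by simp
  show b0: "0 < \<beta>" unfolding \<beta>_def using m0 t0 by simp
  have "K * r \<ge> 0" using K1 r0 by simp
  then have "t \<le> 4 * m" unfolding m_def using tr by linarith
  then show "\<beta> \<le> 1/2" unfolding \<beta>_def using m0 by (simp add: field_simps)
  have \<mu>: "s * m \<le> M * K * (s / (2 * n))"
  proof -
    have "s * m = (r * n) * K * s / (2 * n)" unfolding m_def using n1 by (simp add: field_simps)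
    also have "\<dots> \<le> M * K * s / (2 * n)" using Ml K1 s0 n1 by (intro divide_right_mono mult_right_mono) auto
    finally show ?thesis by simp
  qed
  have mt: "m - t / 2 \<ge> 0" unfolding m_def using tr by simp
  have "- (M * K * (s / (2 * n)) * \<beta>) + s * (m - t / 2) * (\<beta> + 2 * \<beta>^2)
        \<le> - (s * m * \<beta>) + s * (m - t / 2) * (\<beta> + 2 * \<beta>^2)"
  proof -
    have "s * m * \<beta> \<le> M * K * (s / (2 * n)) * \<beta>" using \<mu> b0 by (intro mult_right_mono) auto
    then show ?thesis by linarith
  qed
  also have "\<dots> \<le> - (s * m * \<beta>) + s * (m - t / 2) * \<beta> + s * m * (2 * \<beta>^2)"
  proof -
    have "s * (m - t / 2) * (2 * \<beta>^2) \<le> s * m * (2 * \<beta>^2)" using s0 t0 by (intro mult_right_mono mult_left_mono) auto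
    then show ?thesis by (simp add: algebra_simps)
  qed
  also have "\<dots> = s * (- (t^2 / (32 * m)))" unfolding \<beta>_def using m0 by (simp add: field_simps power2_eq_square)
  also have "\<dots> \<le> s * (- (t^2 / (64 * K * r)))"
  proof -
    have "t^2 / (64 * K * r) \<le> t^2 / (32 * m)" unfolding m_def using K1 r0 by (simp add: field_simps)
    then show ?thesis using s0 by (intro mult_left_mono) auto
  qed
  finally show "- (M * K * (s / (2 * n)) * \<beta>) + s * (m - t / 2) * (\<beta> + 2 * \<beta>^2) \<le> - (s * t^2 / (64 * K * r))" by simp
qed

lemma binomial_le_ratio_power:
  fixes \<delta> :: real
  assumes s1: "s \<ge> 1" and sd: "real s \<ge> \<delta> * real N / 4" and d0: "\<delta> > 0"
  shows "real ((2 * N) choose s) \<le> (8 * exp 1 / \<delta>) ^ s"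
proof -
  have sp: "real s > 0" using s1 by simp
  have "real ((2 * N) choose s) \<le> real (2 * N) ^ s / fact s" by (rule binomial_le_power_div_fact)
  also have "\<dots> \<le> real (2 * N) ^ s * (exp 1 ^ s / real s ^ s)"
  proof -
    have "real s ^ s / fact s \<le> exp (real s)" by (rule power_div_fact_le_exp) simp
    then have "1 / fact s \<le> exp 1 ^ s / real s ^ s" using sp
      by (simp add: field_simps exp_of_nat_mult[symmetric] mult.commute)
    then show ?thesis by (metis mult_left_mono times_divide_eq_right mult.right_neutral zero_le_power of_nat_0_le_iff)
  qed
  also have "\<dots> = (real (2 * N) * exp 1 / real s) ^ s" by (simp add: power_mult_distrib power_divide)
  also have "\<dots> \<le> (8 * exp 1 / \<delta>) ^ s"
  proof (rule power_mono)
    have "real (2 * N) * \<delta> \<le> 8 * real s" using sd by simp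
    then show "real (2 * N) * exp 1 / real s \<le> 8 * exp 1 / \<delta>" using sp d0
      by (simp add: field_simps)
  qed simp
  finally show ?thesis .
qed

lemma binomial_mult_exp_le:
  fixes \<delta> \<gamma> :: real
  assumes N0: "N > 0" and s1: "s \<ge> 1" and sd: "real s \<ge> \<delta> * real N / 4" and d0: "\<delta> > 0"
    and \<gamma>: "ln (8 * exp 1 / \<delta>) + 1 \<le> \<gamma>"
  shows "real ((2 * N) choose s) * (2 * exp (- (real s * \<gamma>))) \<le> 8 / (\<delta> * real N)"
proof -
  have "real ((2 * N) choose s) \<le> (8 * exp 1 / \<delta>) ^ s" by (rule binomial_le_ratio_power[OF s1 sd d0])
  also have "\<dots> = exp (real s * ln (8 * exp 1 / \<delta>))"
    using exp_of_nat_mult[of s "ln (8 * exp 1 / \<delta>)"] d0 by simp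
  finally have "real ((2 * N) choose s) * (2 * exp (- (real s * \<gamma>)))
      \<le> 2 * exp (real s * ln (8 * exp 1 / \<delta>) - real s * \<gamma>)"
    by (simp add: exp_diff exp_minus field_simps)
  also have "\<dots> \<le> 2 * exp (- real s)"
  proof -
    have "real s * (ln (8 * exp 1 / \<delta>) - \<gamma>) \<le> real s * (-1)" using \<gamma> by (intro mult_left_mono) auto
    then show ?thesis by (simp add: algebra_simps)
  qed
  also have "\<dots> \<le> 2 / real s"
  proof -
    have "real s \<le> exp (real s)" using exp_ge_add_one_self[of "real s"] by linarith
    then show ?thesis using s1 by (simp add: exp_minus field_simps)
  qed
  also have "\<dots> \<le> 8 / (\<delta> * real N)" using N0 sd d0 s1 by (simp add: field_simps)
  finally show ?thesis .
qed

lemma card_many_half_deviating_bound: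
  fixes r \<delta> :: real
  assumes N1: "N \<ge> 1" and k1: "k \<ge> 1" and r0: "r > 0"
    and t4: "4 * real k \<le> dev_threshold k" and tr: "dev_threshold k \<le> real k * r"
    and d0: "\<delta> > 0" and \<gamma>: "ln (8 * exp 1 / \<delta>) + 1 \<le> dev_threshold k ^ 2 / (64 * real k * r)"
    and Mu: "real M \<le> r * real N + 1" and Ml: "r * real N \<le> real M"
  shows "real (card {\<Phi>\<in>formulas k N M. 2 * real (card (half_deviating k r N M \<Phi>)) > \<delta> * real N})
    \<le> real (card (formulas k N M)) * (8 / (\<delta> * real N))"
proof -
  define cF where "cF = real (card (formulas k N M))"
  have cF0: "cF > 0" unfolding cF_def card_formulas using N1 by simp
  define s where "s = nat \<lceil>\<delta> * real N / 4\<rceil>"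
  have sd: "real s \<ge> \<delta> * real N / 4" unfolding s_def by (rule real_nat_ceiling_ge)
  have "\<delta> * real N / 4 > 0" using d0 N1 by simp
  then have s1: "s \<ge> 1" using sd by (cases s) auto
  define \<gamma> where "\<gamma> = dev_threshold k ^ 2 / (64 * real k * r)"
  define \<beta>1 where "\<beta>1 = (dev_threshold k - real k) / (4 * (real k * r / 2 + dev_threshold k / 2))"
  define \<beta>2 where "\<beta>2 = dev_threshold k / (8 * (real k * r / 2))"
  have "real N \<ge> 1" "real k \<ge> 1" "2 * real k \<le> dev_threshold k" "dev_threshold k > 0"
    using N1 k1 t4 by auto
  note up = chernoff_exponent_upper[OF this(1,2) r0 this(3) tr Mu, of "real s"]
  note down = chernoff_exponent_lower[OF \<open>real N \<ge> 1\<close> \<open>real k \<ge> 1\<close> r0 \<open>dev_threshold k > 0\<close> tr Ml, of "real s"]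
  define E1 where "E1 = real (M * k) * (real s / (2 * real N)) * \<beta>1 - real s * (real k * r / 2 + dev_threshold k / 2) * (\<beta>1 - \<beta>1^2)"
  define E2 where "E2 = - (real (M * k) * (real s / (2 * real N)) * \<beta>2) + real s * (real k * r / 2 - dev_threshold k / 2) * (\<beta>2 + 2 * \<beta>2^2)"
  have "real (card {\<Phi>\<in>formulas k N M. 2 * real (card (half_deviating k r N M \<Phi>)) > \<delta> * real N})
      \<le> cF * real ((2 * N) choose s) * (exp E1 + exp E2)"
    unfolding cF_def E1_def E2_def
    using up(2,3) down(2,3) r0 \<open>dev_threshold k > 0\<close> tr unfolding \<beta>1_def \<beta>2_def
    by (intro card_many_half_deviating_le[OF _ s_def]) (use N1 in auto)
  also have "\<dots> \<le> cF * (real ((2 * N) choose s) * (2 * exp (- (real s * \<gamma>))))"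
  proof -
    have "E1 \<le> - (real s * \<gamma>)" "E2 \<le> - (real s * \<gamma>)"
      using up(1) down(1) unfolding E1_def E2_def \<beta>1_def \<beta>2_def \<gamma>_def by simp_all
    then have "exp E1 \<le> exp (- (real s * \<gamma>))" "exp E2 \<le> exp (- (real s * \<gamma>))" by simp_all
    then have "exp E1 + exp E2 \<le> 2 * exp (- (real s * \<gamma>))" by linarith
    then show ?thesis using cF0 by (simp add: mult_left_mono)
  qed
  also have "\<dots> \<le> cF * (8 / (\<delta> * real N))"
    using binomial_mult_exp_le[OF _ s1 sd d0 \<gamma>[folded \<gamma>_def]] cF0 N1 by (intro mult_left_mono) auto
  finally show ?thesis unfolding cF_def .
qed

section \<open>The extension property with high probability\<close>

lemma card_Int_ge_diff:
  assumes "finite F" "finite A" "finite B" "F \<subseteq> E \<union> A \<union> B"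
  shows "real (card F) - real (card A) - real (card B) \<le> real (card (F \<inter> E))"
proof -
  have "card F \<le> card ((F \<inter> E) \<union> A \<union> B)" using assms by (intro card_mono) auto
  also have "\<dots> \<le> card ((F \<inter> E) \<union> A) + card B" by (rule card_Un_le)
  also have "\<dots> \<le> card (F \<inter> E) + card A + card B" using card_Un_le[of "F \<inter> E" A] by linarith
  finally show ?thesis by linarith
qed

lemma formulas_subset_extension_or_bad:
  assumes "4 * real k \<le> dev_threshold k" "dev_threshold k > 0"
  shows "formulas k N M \<subseteq> {\<Phi>. extension_property k r N M \<Phi>} \<union> (formulas k N M - {\<Phi>. expanding k N M \<delta> \<Phi>})
      \<union> {\<Phi>\<in>formulas k N M. 2 * real (card (half_deviating k r N M \<Phi>)) > \<delta> * real N}"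
proof
  fix \<Phi> assume "\<Phi> \<in> formulas k N M"
  show "\<Phi> \<in> {\<Phi>. extension_property k r N M \<Phi>} \<union> (formulas k N M - {\<Phi>. expanding k N M \<delta> \<Phi>})
      \<union> {\<Phi>\<in>formulas k N M. 2 * real (card (half_deviating k r N M \<Phi>)) > \<delta> * real N}"
  proof (cases "expanding k N M \<delta> \<Phi> \<and> 2 * real (card (half_deviating k r N M \<Phi>)) \<le> \<delta> * real N")
    case True
    then show ?thesis using extension_property_if_expanding[OF _ _ assms] by blast
  qed (use \<open>\<Phi> \<in> formulas k N M\<close> in auto)
qed

lemma nat_ceiling_mult_bounds:
  fixes r :: real
  assumes "r \<ge> 1" "N \<ge> 1"
  shows "r * real N \<le> real (nat \<lceil>r * real N\<rceil>)" "real (nat \<lceil>r * real N\<rceil>) \<le> r * real N + 1"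
    "real (nat \<lceil>r * real N\<rceil>) \<le> (2 * r) * real N"
proof -
  show "r * real N \<le> real (nat \<lceil>r * real N\<rceil>)" by linarith
  have "real (nat \<lceil>r * real N\<rceil>) = of_int \<lceil>r * real N\<rceil>" using assms(1) by simp
  then show upper: "real (nat \<lceil>r * real N\<rceil>) \<le> r * real N + 1"
    using ceiling_correct[of "r * real N"] by linarith
  have "1 * 1 \<le> r * real N" using assms by (intro mult_mono) auto
  then show "real (nat \<lceil>r * real N\<rceil>) \<le> (2 * r) * real N" using upper by linarith
qed

text \<open>\<open>c\<close> and \<open>\<delta>\<close> are chosen so that the first-moment bound for expansion is geometric
  (\<open>c \<delta> = 1/8\<close>) while \<open>\<delta>\<close> does not depend on \<open>N\<close>.\<close>
lemma prob_extension_property_ge: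
  fixes k N :: nat and r :: real
  defines "c \<equiv> exp 2 * (2 * r) * real (k choose 3)"
  defines "\<delta> \<equiv> 1 / (8 * c)"
  defines "M \<equiv> nat \<lceil>r * real N\<rceil>"
  assumes k3: "k \<ge> 3" and r1: "r \<ge> 1"
    and t4: "4 * real k \<le> dev_threshold k" and tr: "dev_threshold k \<le> real k * r"
    and \<gamma>: "ln (8 * exp 1 / \<delta>) + 1 \<le> dev_threshold k ^ 2 / (64 * real k * r)"
    and N1: "N \<ge> 1"
  shows "measure_pmf.prob (random_formula k N M) {\<Phi>. extension_property k r N M \<Phi>}
          \<ge> 1 - 8 * c^2 * inverse (real N ^ 2) - (8 / \<delta>) * inverse (real N)"
proof -
  define F where "F = formulas k N M"
  define cF where "cF = real (card F)"
  have cF0: "cF > 0" unfolding cF_def F_def card_formulas using N1 by simp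
  have N0: "N > 0" and k1: "k \<ge> 1" and r0: "r > 0" using N1 k3 r1 by auto
  have "1 \<le> real (k choose 3)" using k3 by (simp add: Suc_le_eq)
  then have "1 * 1 \<le> (2 * r) * real (k choose 3)" using r1 by (intro mult_mono) auto
  then have "1 * 1 \<le> exp 2 * ((2 * r) * real (k choose 3))" by (intro mult_mono) auto
  then have c1: "c \<ge> 1" unfolding c_def by (simp add: mult.assoc)
  have d0: "\<delta> > 0" and cd: "c * \<delta> \<le> 1/8" unfolding \<delta>_def using c1 by auto
  note M_bounds = nat_ceiling_mult_bounds[OF r1 N1, folded M_def]
  have not_expanding: "real (card (F - {\<Phi>. expanding k N M \<delta> \<Phi>})) \<le> cF * (8 * c^2 / real N ^ 2)"
    unfolding F_def cF_def using r1 d0 by (intro card_non_expanding_bound[OF N0 M_bounds(3) _ _ c_def[THEN meta_eq_to_obj_eq] cd c1]) auto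
  have many_deviating: "real (card {\<Phi>\<in>F. 2 * real (card (half_deviating k r N M \<Phi>)) > \<delta> * real N})
      \<le> cF * (8 / (\<delta> * real N))"
    unfolding F_def cF_def by (rule card_many_half_deviating_bound[OF N1 k1 r0 t4 tr d0 \<gamma> M_bounds(2,1)])
  have "dev_threshold k > 0" using t4 k3 by linarith
  have "F \<subseteq> {\<Phi>. extension_property k r N M \<Phi>} \<union> (F - {\<Phi>. expanding k N M \<delta> \<Phi>})
      \<union> {\<Phi>\<in>F. 2 * real (card (half_deviating k r N M \<Phi>)) > \<delta> * real N}"
    unfolding F_def by (rule formulas_subset_extension_or_bad[OF t4 \<open>dev_threshold k > 0\<close>])
  then have "real (card F) - real (card (F - {\<Phi>. expanding k N M \<delta> \<Phi>}))
      - real (card {\<Phi>\<in>F. 2 * real (card (half_deviating k r N M \<Phi>)) > \<delta> * real N})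
      \<le> real (card (F \<inter> {\<Phi>. extension_property k r N M \<Phi>}))"
    unfolding F_def by (intro card_Int_ge_diff) (auto simp: finite_formulas)
  then have "cF * (1 - 8 * c^2 / real N ^ 2 - 8 / (\<delta> * real N))
      \<le> real (card (F \<inter> {\<Phi>. extension_property k r N M \<Phi>}))"
    using not_expanding many_deviating unfolding cF_def by (simp add: algebra_simps)
  then have "1 - 8 * c^2 / real N ^ 2 - 8 / (\<delta> * real N)
      \<le> real (card (F \<inter> {\<Phi>. extension_property k r N M \<Phi>})) / cF"
    using cF0 by (simp add: le_divide_eq mult.commute)
  then show ?thesis
    using prob_random_formula[OF N0, of k M] unfolding F_def cF_def by (simp add: divide_inverse)
qed

lemma prob_extension_property_tendsto_1:
  fixes k :: nat and r :: real
  defines "c \<equiv> exp 2 * (2 * r) * real (k choose 3)"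
  defines "\<delta> \<equiv> 1 / (8 * c)"
  assumes "k \<ge> 3" "r \<ge> 1" "4 * real k \<le> dev_threshold k" "dev_threshold k \<le> real k * r"
    and "ln (8 * exp 1 / \<delta>) + 1 \<le> dev_threshold k ^ 2 / (64 * real k * r)"
  shows "(\<lambda>N. measure_pmf.prob (random_formula k N (nat \<lceil>r * real N\<rceil>))
            {\<Phi>. extension_property k r N (nat \<lceil>r * real N\<rceil>) \<Phi>}) \<longlonglongrightarrow> 1"
proof (rule tendsto_sandwich)
  define h where "h N = 1 - 8 * c^2 * inverse (real N ^ 2) - (8 / \<delta>) * inverse (real N)" for N :: nat
  show "\<forall>\<^sub>F N in sequentially. h N \<le> measure_pmf.prob (random_formula k N (nat \<lceil>r * real N\<rceil>))
            {\<Phi>. extension_property k r N (nat \<lceil>r * real N\<rceil>) \<Phi>}"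
    using eventually_ge_at_top[of "1::nat"]
  proof eventually_elim
    case (elim N)
    show ?case unfolding h_def c_def \<delta>_def
      using prob_extension_property_ge[OF assms(3-7)[unfolded \<delta>_def c_def] elim] by simp
  qed
  show "\<forall>\<^sub>F N in sequentially. measure_pmf.prob (random_formula k N (nat \<lceil>r * real N\<rceil>))
            {\<Phi>. extension_property k r N (nat \<lceil>r * real N\<rceil>) \<Phi>} \<le> 1"
    by (simp add: measure_pmf.prob_le_1)
  have "(\<lambda>N::nat. inverse (real N ^ 2)) \<longlonglongrightarrow> 0" "(\<lambda>N::nat. inverse (real N)) \<longlonglongrightarrow> 0"
    by real_asymp+
  then have "h \<longlonglongrightarrow> 1 - 8 * c^2 * 0 - (8 / \<delta>) * 0" unfolding h_def by (intro tendsto_intros)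
  then show "h \<longlonglongrightarrow> 1" by simp
  show "(\<lambda>N. 1::real) \<longlonglongrightarrow> 1" by simp
qed

lemma clause_density_bounds:
  fixes r e :: real
  assumes "r = 2 ^ k * ln 2 - (1 + ln 2) / 2 - e" "0 < e" "e \<le> 1" "k \<ge> 4"
  shows "2 ^ k / 2 \<le> r" "r \<le> 2 ^ k"
proof -
  have l2: "2/3 \<le> ln (2::real)" by (rule ln2_ge_two_thirds)
  have l2': "ln (2::real) < 1" by (rule ln_2_less_1)
  have "(2::real) ^ 4 \<le> 2 ^ k" using assms(4) by (intro power_increasing) auto
  then have p16: "(2::real) ^ k \<ge> 16" by simp
  have "2 ^ k * (2/3) \<le> (2::real) ^ k * ln 2" using l2 by (intro mult_left_mono) auto
  moreover have "(1 + ln 2) / 2 \<le> (1::real)" using l2' by simp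
  ultimately show "2 ^ k / 2 \<le> r" using assms(1,3) p16 by linarith
  have "2 ^ k * ln 2 \<le> (2::real) ^ k * 1" using l2' by (intro mult_left_mono) auto
  moreover have "(1 + ln 2) / 2 > (0::real)" using l2 by simp
  ultimately show "r \<le> 2 ^ k" using assms(1,2) by linarith
qed

lemma two_powr_half_mult_self: "2 powr (real k / 2) * 2 powr (real k / 2) = (2::real) ^ k"
  by (simp add: powr_add[symmetric] powr_realpow[symmetric])

lemma dev_threshold_square: "dev_threshold k ^ 2 = real k ^ 6 * 2 ^ k"
  unfolding dev_threshold_def power2_eq_square
  by (simp add: two_powr_half_mult_self[symmetric] power_mult_distrib ac_simps power_add[symmetric])

lemma ln_ratio_le:
  fixes r K :: real
  assumes "1 \<le> r" "r \<le> 2 ^ k" "1 \<le> K" "K \<le> real k ^ 3" "k \<ge> 1"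
  shows "ln (2 ^ 7 * exp 3 * r * K) \<le> 10 + 4 * real k"
proof -
  have "ln (2 ^ 7 * exp 3 * r * K) = ln (2 ^ 7) + ln (exp 3) + ln r + ln K"
    using assms(1,3) by (simp add: ln_mult)
  also have "\<dots> \<le> 7 + 3 + real k + 3 * real k"
  proof -
    have "ln ((2::real) ^ 7) = 7 * ln 2" using ln_realpow[of 2 7] by (simp del: ln_realpow)
    then have a: "ln ((2::real) ^ 7) \<le> 7" using ln_2_less_1 by simp
    have "ln r \<le> ln (2 ^ k)" using assms(1,2) by simp
    also have "\<dots> = real k * ln 2" by (simp add: ln_realpow)
    also have "\<dots> \<le> real k" using ln_2_less_1 by (simp add: mult_left_le)
    finally have b: "ln r \<le> real k" .
    have "real k \<ge> 1" using assms(5) by simp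
    have "ln K \<le> ln (real k ^ 3)" using assms(3,4,5) by (subst ln_le_cancel_iff) auto
    also have "\<dots> = 3 * ln (real k)" using \<open>real k \<ge> 1\<close> by (simp add: ln_realpow)
    also have "\<dots> \<le> 3 * real k" using ln_le_minus_one[of "real k"] \<open>real k \<ge> 1\<close> by simp
    finally have c: "ln K \<le> 3 * real k" .
    show ?thesis using a b c by simp
  qed
  finally show ?thesis by simp
qed

text \<open>In the last inequality the Chernoff exponent, of order \<open>k\<^sup>5\<close>, beats the cost
  \<open>ln (8 e / \<delta>)\<close> per literal of the union bound over literal sets, which is linear in \<open>k\<close>.\<close>
lemma clause_density_conditions:
  fixes k :: nat and r e :: real
  defines "c \<equiv> exp 2 * (2 * r) * real (k choose 3)"
  defines "\<delta> \<equiv> 1 / (8 * c)"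
  assumes rdef: "r = 2 ^ k * ln 2 - (1 + ln 2) / 2 - e"
    and e: "0 < e" "e \<le> 1" and k20: "k \<ge> 20"
    and kp: "real k ^ 2 \<le> 2 powr (real k / 2) / 2" and k5: "11 + 4 * real k \<le> real k ^ 5 / 64"
  shows "r \<ge> 1" "4 * real k \<le> dev_threshold k" "dev_threshold k \<le> real k * r"
    "ln (8 * exp 1 / \<delta>) + 1 \<le> dev_threshold k ^ 2 / (64 * real k * r)"
proof -
  note r = clause_density_bounds[OF rdef e] k20
  have "(2::real) ^ 4 \<le> 2 ^ k" using k20 by (intro power_increasing) auto
  then show r1: "r \<ge> 1" using r by simp
  define P where "P = 2 powr (real k / 2)"
  have P1: "P \<ge> 1" unfolding P_def by (rule ge_one_powr_ge_zero) auto
  have k1: "real k \<ge> 20" using k20 by simp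
  have "2 * 2 \<le> real k * real k" using k1 by (intro mult_mono) auto
  then have "4 * real k \<le> real k ^ 3"
    using mult_right_mono[of "2 * 2" "real k * real k" "real k"] by (simp add: power3_eq_cube)
  also have "\<dots> \<le> real k ^ 3 * P" using mult_left_mono[OF P1, of "real k ^ 3"] by simp
  finally show "4 * real k \<le> dev_threshold k" unfolding dev_threshold_def P_def .
  have "dev_threshold k = real k * (real k ^ 2 * P)"
    unfolding dev_threshold_def P_def by (simp add: power3_eq_cube power2_eq_square)
  also have "\<dots> \<le> real k * (P / 2 * P)" using kp P1 unfolding P_def by (intro mult_left_mono mult_right_mono) auto
  also have "\<dots> = real k * (2 ^ k / 2)"
    unfolding P_def using two_powr_half_mult_self[of k] by simp
  also have "\<dots> \<le> real k * r" using r by (intro mult_left_mono) auto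
  finally show "dev_threshold k \<le> real k * r" .
  have "1 \<le> real (k choose 3)" using k20 by (simp add: Suc_le_eq)
  moreover have "k choose 3 \<le> k ^ 3" using k20 by (intro binomial_le_pow) simp
  then have "real (k choose 3) \<le> real k ^ 3" by (metis of_nat_le_iff of_nat_power)
  moreover have "8 * exp 1 / \<delta> = 2 ^ 7 * exp 3 * r * real (k choose 3)"
    unfolding \<delta>_def c_def by (simp add: field_simps exp_add[symmetric])
  ultimately have "ln (8 * exp 1 / \<delta>) + 1 \<le> 11 + 4 * real k"
    using ln_ratio_le[of r k "real (k choose 3)"] r r1 k20 by simp
  also have "\<dots> \<le> real k ^ 5 * 1 / 64" using k5 by simp
  also have "\<dots> \<le> real k ^ 5 * (2 ^ k / r) / 64"
    using r r1 by (intro divide_right_mono mult_left_mono) auto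
  also have "\<dots> = dev_threshold k ^ 2 / (64 * real k * r)"
    unfolding dev_threshold_square using k1 by (simp add: field_simps power_eq_if)
  finally show "ln (8 * exp 1 / \<delta>) + 1 \<le> dev_threshold k ^ 2 / (64 * real k * r)" .
qed

theorem lemmaB6:
  fixes eps :: "nat \<Rightarrow> real"
  assumes "eps \<in> \<Theta>(\<lambda>k. 2 powr (- real k / 3))"
    and "\<forall>\<^sub>F k in at_top. eps k > 0"
  shows "\<forall>\<^sub>F k in at_top.
    (\<lambda>N. let r = clause_density eps k; M = nat \<lceil>r * real N\<rceil> in
       measure_pmf.prob (random_formula k N M) {\<Phi>. extension_property k r N M \<Phi>})
    \<longlonglongrightarrow> 1"
proof -
  have "eps \<in> O(\<lambda>k. 2 powr (- real k / 3))" using assms(1) by (rule bigthetaD1)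
  moreover have "(\<lambda>k::nat. 2 powr (- real k / 3)) \<in> o(\<lambda>k. 1)" by real_asymp
  ultimately have "eps \<in> o(\<lambda>k. 1)" by (rule landau_o.big_small_trans)
  then have "eps \<longlonglongrightarrow> 0" using smalloD_tendsto by fastforce
  then have "\<forall>\<^sub>F k in at_top. eps k < 1" by (rule order_tendstoD) simp
  moreover have "\<forall>\<^sub>F k in at_top. (k::nat) \<ge> 20" by (rule eventually_ge_at_top)
  moreover have "\<forall>\<^sub>F k in at_top. real k ^ 2 \<le> 2 powr (real k / 2) / 2" by real_asymp
  moreover have "\<forall>\<^sub>F k in at_top. 11 + 4 * real k \<le> real k ^ 5 / 64" by real_asymp
  ultimately show ?thesis using assms(2)
  proof eventually_elim
    case (elim k)
    define r where "r = clause_density eps k"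
    have "r = 2 ^ k * ln 2 - (1 + ln 2) / 2 - eps k" unfolding r_def clause_density_def ..
    note conditions = clause_density_conditions[OF this elim(5) less_imp_le[OF elim(1)] elim(2-4)]
    have "(\<lambda>N. measure_pmf.prob (random_formula k N (nat \<lceil>r * real N\<rceil>))
            {\<Phi>. extension_property k r N (nat \<lceil>r * real N\<rceil>) \<Phi>}) \<longlonglongrightarrow> 1"
      using conditions elim(1,2) by (intro prob_extension_property_tendsto_1) auto
    then show ?case unfolding r_def by (simp add: Let_def)
  qed
qed

end
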